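(* Let $\Omega\subseteq\mathbb{R}^n$ be bounded and measurable, $Y$ a Hilbert space, $S:L^2(\Omega)\to Y$ linear and continuous, $z\in Y$, $u_a,u_b\in L^\infty(\Omega)$, $u_a\le u_b$, $U_{\mathrm{ad}}=\{u\in L^2(\Omega):u_a\le u\le u_b\text{ a.e.}\}$, and let $(S_h)_h$, $\delta$ be as in the context. Let $u^\dagger$ be a solution of $\min_{u\in U_{\mathrm{ad}}}\frac12\|Su-z\|_Y^2$ such that there exists $w\in Y$ with $u^\dagger=P_{U_{\mathrm{ad}}}(S^\ast w)$. Let $(\varepsilon_k)_k$ be positive reals with $\sum_{i=1}^\infty R_i<\infty$, where $R_i:=\frac{\varepsilon_i}{\alpha_i}+\frac{\varepsilon_i^2}{\alpha_i^2}+\frac{\gamma_{i-1}\varepsilon_i}{\alpha_i}+\frac{\varepsilon_i^2}{\alpha_i}$. Let $h_{\max}>0$, and for each $h$ let $(u_k^{\mathrm{in}})_k$ be generated by the inexact Bregman algorithm of the context. Then there exists a constant $C$ such that for every $0<h\le h_{\max}$ there exists a stopping index $k(h)$ with \[\sum_{i=1}^{k(h)}H_i\le C<\infty,\qquad H_i:=\delta(h)\Big[\frac{\rho_i}{\alpha_i}+\frac{\gamma_{i-1}}{\alpha_i}+\frac{\gamma_{i-1}\rho_i}{\alpha_i}\Big]+\delta(h)^2\Big[\frac{\rho_i^2}{\alpha_i^2}+\frac{\rho_i^2}{\alpha_i}\Big],\] and $k(h)\to\infty$ as $h\to0$. Furthermore $u_{k(h)}^{\mathrm{in}}\to u^\dagger$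 in $L^2(\Omega)$ as $h\to0$.
   Context: $\|\cdot\|$: $L^2(\Omega)$ norm; $P_{U_{\mathrm{ad}}}$: $L^2$-projection onto $U_{\mathrm{ad}}$. For each $h>0$, $S_h:L^2(\Omega)\to Y$ is linear continuous with finite-dimensional range, and there is a continuous, monotonically increasing $\delta:\mathbb{R}^+\to\mathbb{R}^+$, $\delta(0)=0$, with $\|(S-S_h)u_h\|_Y+\|(S^\ast-S_h^\ast)(S_hu_h-z)\|\le\delta(h)$ for all $h\ge0$, $u_h\in U_{\mathrm{ad}}$. $(\alpha_k)_k$ is a bounded sequence of positive reals, $\gamma_k:=\sum_{j=1}^k\alpha_j^{-1}$ ($\gamma_0=0$), $\rho_k:=\sqrt{\alpha_k^{-1}(1+\alpha_k^{-1})}$. $\mathcal B(\alpha,\lambda,u):=(1+\frac1\alpha)\|u-P_{U_{\mathrm{ad}}}(\frac1\alpha S_h^\ast(z-S_hu)+\lambda)\|$. Inexact Bregman algorithm: $u_0^{\mathrm{in}}=P_{U_{\mathrm{ad}}}(0)$, $\lambda_0^{\mathrm{in}}=0$; for $k\ge1$ find $u_k^{\mathrm{in}}\in U_{\mathrm{ad}}$ with $\mathcal B(\alpha_k,\lambda_{k-1}^{\mathrm{in}},u_k^{\mathrm{in}})\le\varepsilon_k$, then set $\lambda_k^{\mathrm{in}}=\sum_{i=1}^k\frac1{\alpha_i}S_h^\ast(z-S_hu_i^{\mathrm{in}})$. *)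

theory Defs
  imports "HOL-Analysis.Analysis"
begin

text \<open>L^2(Omega) is represented by square-integrable functions on Omega (representatives;
  all quantities below are invariant under a.e. equality).\<close>

definition L2 :: "'n::euclidean_space set \<Rightarrow> ('n \<Rightarrow> real) set" where
  "L2 \<Omega> = {f. f \<in> borel_measurable (lebesgue_on \<Omega>) \<and>
                 integrable (lebesgue_on \<Omega>) (\<lambda>x. (f x)\<^sup>2)}"

definition L2inner :: "'n::euclidean_space set \<Rightarrow> ('n \<Rightarrow> real) \<Rightarrow> ('n \<Rightarrow> real) \<Rightarrow> real" where
  "L2inner \<Omega> f g = integral\<^sup>L (lebesgue_on \<Omega>) (\<lambda>x. f x * g x)"

definition L2norm :: "'n::euclidean_space set \<Rightarrow> ('n \<Rightarrow> real) \<Rightarrow> real" where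
  "L2norm \<Omega> f = sqrt (integral\<^sup>L (lebesgue_on \<Omega>) (\<lambda>x. (f x)\<^sup>2))"

definition Linfty :: "'n::euclidean_space set \<Rightarrow> ('n \<Rightarrow> real) set" where
  "Linfty \<Omega> = {f. f \<in> borel_measurable (lebesgue_on \<Omega>) \<and>
                  (\<exists>B. AE x in lebesgue_on \<Omega>. \<bar>f x\<bar> \<le> B)}"

definition Uad :: "'n::euclidean_space set \<Rightarrow> ('n \<Rightarrow> real) \<Rightarrow> ('n \<Rightarrow> real) \<Rightarrow> ('n \<Rightarrow> real) set" where
  "Uad \<Omega> ua ub = {u \<in> L2 \<Omega>. AE x in lebesgue_on \<Omega>. ua x \<le> u x \<and> u x \<le> ub x}"

definition projU :: "'n::euclidean_space set \<Rightarrow> ('n \<Rightarrow> real) \<Rightarrow> ('n \<Rightarrow> real) \<Rightarrow> ('n \<Rightarrow> real) \<Rightarrow> ('n \<Rightarrow> real)" where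
  "projU \<Omega> ua ub v = (SOME p. p \<in> Uad \<Omega> ua ub \<and>
      (\<forall>q\<in>Uad \<Omega> ua ub. L2norm \<Omega> (\<lambda>x. p x - v x) \<le> L2norm \<Omega> (\<lambda>x. q x - v x)))"

definition bounded_linear_L2 :: "'n::euclidean_space set \<Rightarrow> (('n \<Rightarrow> real) \<Rightarrow> 'y::real_normed_vector) \<Rightarrow> bool" where
  "bounded_linear_L2 \<Omega> T \<longleftrightarrow>
     (\<forall>f\<in>L2 \<Omega>. \<forall>g\<in>L2 \<Omega>. \<forall>a b. T (\<lambda>x. a * f x + b * g x) = a *\<^sub>R T f + b *\<^sub>R T g) \<and>
     (\<exists>K. \<forall>f\<in>L2 \<Omega>. norm (T f) \<le> K * L2norm \<Omega> f)"

definition is_adjoint_L2 :: "'n::euclidean_space set \<Rightarrow> (('n \<Rightarrow> real) \<Rightarrow> 'y::real_inner) \<Rightarrow> ('y \<Rightarrow> ('n \<Rightarrow> real)) \<Rightarrow> bool" where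
  "is_adjoint_L2 \<Omega> T Tstar \<longleftrightarrow>
     (\<forall>y. Tstar y \<in> L2 \<Omega>) \<and> (\<forall>u\<in>L2 \<Omega>. \<forall>y. inner (T u) y = L2inner \<Omega> u (Tstar y))"

definition gammaB :: "(nat \<Rightarrow> real) \<Rightarrow> nat \<Rightarrow> real" where
  "gammaB \<alpha> k = (\<Sum>j=1..k. 1 / \<alpha> j)"

definition rhoB :: "(nat \<Rightarrow> real) \<Rightarrow> nat \<Rightarrow> real" where
  "rhoB \<alpha> k = sqrt ((1 / \<alpha> k) * (1 + 1 / \<alpha> k))"

definition breg :: "'n::euclidean_space set \<Rightarrow> ('n \<Rightarrow> real) \<Rightarrow> ('n \<Rightarrow> real) \<Rightarrow>
    (('n \<Rightarrow> real) \<Rightarrow> 'y::real_inner) \<Rightarrow> ('y \<Rightarrow> ('n \<Rightarrow> real)) \<Rightarrow> 'y \<Rightarrow>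
    real \<Rightarrow> ('n \<Rightarrow> real) \<Rightarrow> ('n \<Rightarrow> real) \<Rightarrow> real" where
  "breg \<Omega> ua ub Sh Shs z a lam u =
     (1 + 1 / a) * L2norm \<Omega> (\<lambda>x. u x -
        projU \<Omega> ua ub (\<lambda>x. (1 / a) * Shs (z - Sh u) x + lam x) x)"

definition lamB :: "(nat \<Rightarrow> real) \<Rightarrow> (('n \<Rightarrow> real) \<Rightarrow> 'y::real_inner) \<Rightarrow> ('y \<Rightarrow> ('n \<Rightarrow> real)) \<Rightarrow> 'y \<Rightarrow>
    (nat \<Rightarrow> ('n \<Rightarrow> real)) \<Rightarrow> nat \<Rightarrow> ('n \<Rightarrow> real)" where
  "lamB \<alpha> Sh Shs z u k = (\<lambda>x. \<Sum>i=1..k. (1 / \<alpha> i) * Shs (z - Sh (u i)) x)"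

end

theory Submission
  imports Defs
begin

text \<open>
  Let p_k = P(lambda_k) be the exact projection of the accumulated dual variable; by the stopping
  test of the inner solver, the inexact iterate u_k stays within eps_k of p_k. The Bregman distance
  D_k = 1/2 ||u_dag - p_k||^2 + (p_k - lambda_k, u_dag - p_k) dominates 1/2 ||u_dag - p_k||^2 by the
  projection inequality. The source condition u_dag = P(S* w) and the first-order optimality of
  u_dag make gamma_k D_k + 1/2 ||w - sum_{i<=k} alpha_i^-1 S(u_dag - u_i)||^2 grow per step only by
  terms proportional to eps_k and delta(h), and a discrete Bihari inequality bounds it uniformly in k
  as long as delta(h) times the accumulated weights stays below sqrt(delta(h)). Hence
  ||u_k - u_dag|| <= eps_k + O(gamma_k^-1/2). The stopping index k(h) is the largest index up to 1/h
  for which that product is below sqrt(delta(h)): then the H-sum is at most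
  sqrt(delta(hmax)) (1 + delta(hmax)), and k(h) tends to infinity because delta(h) tends to 0.
\<close>

section \<open>Square-integrable functions as an inner product space\<close>

lemma L2_borel_measurable: "f \<in> L2 \<Omega> \<Longrightarrow> f \<in> borel_measurable (lebesgue_on \<Omega>)"
  by (simp add: L2_def)

lemma L2_integrable_square: "f \<in> L2 \<Omega> \<Longrightarrow> integrable (lebesgue_on \<Omega>) (\<lambda>x. (f x)\<^sup>2)"
  by (simp add: L2_def)

lemma L2_integrable_mult:
  assumes "f \<in> L2 \<Omega>" "g \<in> L2 \<Omega>"
  shows "integrable (lebesgue_on \<Omega>) (\<lambda>x. f x * g x)"
proof (rule Bochner_Integration.integrable_bound[of _ "\<lambda>x. (f x)\<^sup>2 + (g x)\<^sup>2"])
  show "integrable (lebesgue_on \<Omega>) (\<lambda>x. (f x)\<^sup>2 + (g x)\<^sup>2)"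
    using assms by (intro Bochner_Integration.integrable_add L2_integrable_square)
  show "(\<lambda>x. f x * g x) \<in> borel_measurable (lebesgue_on \<Omega>)"
    using assms by (intro borel_measurable_times L2_borel_measurable)
  have "\<bar>f x * g x\<bar> \<le> (f x)\<^sup>2 + (g x)\<^sup>2" for x
  proof -
    have "2 * (\<bar>f x\<bar> * \<bar>g x\<bar>) \<le> (f x)\<^sup>2 + (g x)\<^sup>2"
      using sum_squares_bound[of "\<bar>f x\<bar>" "\<bar>g x\<bar>"] by (simp add: power2_eq_square mult.assoc)
    then show ?thesis unfolding abs_mult using mult_nonneg_nonneg[OF abs_ge_zero abs_ge_zero, of "f x" "g x"]
      by linarith
  qed
  then show "AE x in lebesgue_on \<Omega>. norm (f x * g x) \<le> norm ((f x)\<^sup>2 + (g x)\<^sup>2)"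
    by simp
qed

lemma L2_lincomb:
  assumes "f \<in> L2 \<Omega>" "g \<in> L2 \<Omega>"
  shows "(\<lambda>x. a * f x + b * g x) \<in> L2 \<Omega>"
proof -
  have "integrable (lebesgue_on \<Omega>) (\<lambda>x. a\<^sup>2 * (f x)\<^sup>2 + b\<^sup>2 * (g x)\<^sup>2 + (2*a*b) * (f x * g x))"
    using assms L2_integrable_mult[OF assms]
    by (intro Bochner_Integration.integrable_add integrable_mult_right L2_integrable_square)
  moreover have "(\<lambda>x. (a * f x + b * g x)\<^sup>2)
      = (\<lambda>x. a\<^sup>2 * (f x)\<^sup>2 + b\<^sup>2 * (g x)\<^sup>2 + (2*a*b) * (f x * g x))"
    by (simp add: power2_eq_square algebra_simps)
  ultimately have "integrable (lebesgue_on \<Omega>) (\<lambda>x. (a * f x + b * g x)\<^sup>2)"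
    by simp
  moreover have "(\<lambda>x. a * f x + b * g x) \<in> borel_measurable (lebesgue_on \<Omega>)"
    using assms by (intro borel_measurable_add borel_measurable_times borel_measurable_const L2_borel_measurable)
  ultimately show ?thesis by (simp add: L2_def)
qed

lemma L2_diff: "f \<in> L2 \<Omega> \<Longrightarrow> g \<in> L2 \<Omega> \<Longrightarrow> (\<lambda>x. f x - g x) \<in> L2 \<Omega>"
  using L2_lincomb[of f \<Omega> g 1 "-1"] by simp

lemma L2_add: "f \<in> L2 \<Omega> \<Longrightarrow> g \<in> L2 \<Omega> \<Longrightarrow> (\<lambda>x. f x + g x) \<in> L2 \<Omega>"
  using L2_lincomb[of f \<Omega> g 1 1] by simp

lemma L2_scale: "f \<in> L2 \<Omega> \<Longrightarrow> (\<lambda>x. a * f x) \<in> L2 \<Omega>"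
  using L2_lincomb[of f \<Omega> f a 0] by simp

lemma L2_abs: "f \<in> L2 \<Omega> \<Longrightarrow> (\<lambda>x. \<bar>f x\<bar>) \<in> L2 \<Omega>"
  by (auto simp: L2_def)

lemma L2_sum:
  "finite I \<Longrightarrow> (\<And>i. i \<in> I \<Longrightarrow> f i \<in> L2 \<Omega>) \<Longrightarrow> (\<lambda>x. \<Sum>i\<in>I. c i * f i x) \<in> L2 \<Omega>"
proof (induction I rule: finite_induct)
  case empty
  then show ?case by (simp add: L2_def)
next
  case (insert a F)
  then show ?case using L2_lincomb[of "f a" \<Omega> "\<lambda>x. \<Sum>i\<in>F. c i * f i x" "c a" 1] by simp
qed

lemma Linfty_subset_L2:
  assumes "bounded \<Omega>" "\<Omega> \<in> sets lebesgue" "f \<in> Linfty \<Omega>"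
  shows "f \<in> L2 \<Omega>"
proof -
  obtain B where f: "f \<in> borel_measurable (lebesgue_on \<Omega>)" and B: "AE x in lebesgue_on \<Omega>. \<bar>f x\<bar> \<le> B"
    using assms(3) by (auto simp: Linfty_def)
  interpret finite_measure "lebesgue_on \<Omega>"
    using assms(1,2) by (intro finite_measure_lebesgue_on bounded_set_imp_lmeasurable)
  have "integrable (lebesgue_on \<Omega>) (\<lambda>x. (f x)\<^sup>2)"
  proof (rule Bochner_Integration.integrable_bound[of _ "\<lambda>x. B\<^sup>2"])
    show "(\<lambda>x. (f x)\<^sup>2) \<in> borel_measurable (lebesgue_on \<Omega>)" using f by measurable
    show "AE x in lebesgue_on \<Omega>. norm ((f x)\<^sup>2) \<le> norm (B\<^sup>2)"
      using B by eventually_elim (simp add: abs_le_square_iff[symmetric])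
  qed simp
  then show ?thesis using f by (simp add: L2_def)
qed

lemma L2inner_commute: "L2inner \<Omega> f g = L2inner \<Omega> g f"
  by (simp add: L2inner_def mult.commute)

lemma L2inner_lincomb_left:
  assumes "f \<in> L2 \<Omega>" "g \<in> L2 \<Omega>" "h \<in> L2 \<Omega>"
  shows "L2inner \<Omega> (\<lambda>x. a * f x + b * g x) h = a * L2inner \<Omega> f h + b * L2inner \<Omega> g h"
proof -
  have "L2inner \<Omega> (\<lambda>x. a * f x + b * g x) h
      = integral\<^sup>L (lebesgue_on \<Omega>) (\<lambda>x. a * (f x * h x) + b * (g x * h x))"
    unfolding L2inner_def by (rule Bochner_Integration.integral_cong) (auto simp: algebra_simps)
  then show ?thesis
    unfolding L2inner_def using L2_integrable_mult[OF assms(1,3)] L2_integrable_mult[OF assms(2,3)]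
    by simp
qed

lemma L2inner_diff_left: "f \<in> L2 \<Omega> \<Longrightarrow> g \<in> L2 \<Omega> \<Longrightarrow> h \<in> L2 \<Omega> \<Longrightarrow>
    L2inner \<Omega> (\<lambda>x. f x - g x) h = L2inner \<Omega> f h - L2inner \<Omega> g h"
  using L2inner_lincomb_left[of f \<Omega> g h 1 "-1"] by simp

lemma L2inner_add_left: "f \<in> L2 \<Omega> \<Longrightarrow> g \<in> L2 \<Omega> \<Longrightarrow> h \<in> L2 \<Omega> \<Longrightarrow>
    L2inner \<Omega> (\<lambda>x. f x + g x) h = L2inner \<Omega> f h + L2inner \<Omega> g h"
  using L2inner_lincomb_left[of f \<Omega> g h 1 1] by simp

lemma L2inner_scale_add_left: "f \<in> L2 \<Omega> \<Longrightarrow> g \<in> L2 \<Omega> \<Longrightarrow> h \<in> L2 \<Omega> \<Longrightarrow>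
    L2inner \<Omega> (\<lambda>x. a * f x + g x) h = a * L2inner \<Omega> f h + L2inner \<Omega> g h"
  using L2inner_lincomb_left[of f \<Omega> g h a 1] by simp

lemma L2inner_scale_left: "f \<in> L2 \<Omega> \<Longrightarrow> h \<in> L2 \<Omega> \<Longrightarrow>
    L2inner \<Omega> (\<lambda>x. a * f x) h = a * L2inner \<Omega> f h"
  using L2inner_lincomb_left[of f \<Omega> f h a 0] by simp

lemma L2inner_diff_right: "f \<in> L2 \<Omega> \<Longrightarrow> g \<in> L2 \<Omega> \<Longrightarrow> h \<in> L2 \<Omega> \<Longrightarrow>
    L2inner \<Omega> h (\<lambda>x. f x - g x) = L2inner \<Omega> h f - L2inner \<Omega> h g"
  using L2inner_diff_left[of f \<Omega> g h] by (simp add: L2inner_commute)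

lemma L2inner_add_right: "f \<in> L2 \<Omega> \<Longrightarrow> g \<in> L2 \<Omega> \<Longrightarrow> h \<in> L2 \<Omega> \<Longrightarrow>
    L2inner \<Omega> h (\<lambda>x. f x + g x) = L2inner \<Omega> h f + L2inner \<Omega> h g"
  using L2inner_add_left[of f \<Omega> g h] by (simp add: L2inner_commute)

lemma L2inner_scale_right: "f \<in> L2 \<Omega> \<Longrightarrow> h \<in> L2 \<Omega> \<Longrightarrow>
    L2inner \<Omega> h (\<lambda>x. a * f x) = a * L2inner \<Omega> h f"
  using L2inner_scale_left[of f \<Omega> h a] by (simp add: L2inner_commute)

lemma L2inner_self_nonneg: "0 \<le> L2inner \<Omega> f f"
  unfolding L2inner_def by (rule integral_nonneg_AE) simp

lemma L2inner_cong_AE: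
  assumes "f \<in> L2 \<Omega>" "g \<in> L2 \<Omega>" "f' \<in> L2 \<Omega>" "g' \<in> L2 \<Omega>"
    and "AE x in lebesgue_on \<Omega>. f x = f' x" "AE x in lebesgue_on \<Omega>. g x = g' x"
  shows "L2inner \<Omega> f g = L2inner \<Omega> f' g'"
  unfolding L2inner_def using assms(5,6)
  by (intro integral_cong_AE borel_measurable_times L2_borel_measurable assms(1-4)) auto

lemma L2norm_nonneg: "0 \<le> L2norm \<Omega> f"
  by (simp add: L2norm_def)

lemma L2norm_square: "(L2norm \<Omega> f)\<^sup>2 = L2inner \<Omega> f f"
  using L2inner_self_nonneg[of \<Omega> f] by (simp add: L2norm_def L2inner_def power2_eq_square)

lemma L2norm_add_scale_square:
  assumes "f \<in> L2 \<Omega>" "g \<in> L2 \<Omega>"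
  shows "(L2norm \<Omega> (\<lambda>x. f x + t * g x))\<^sup>2
    = (L2norm \<Omega> f)\<^sup>2 + 2 * t * L2inner \<Omega> f g + t\<^sup>2 * (L2norm \<Omega> g)\<^sup>2"
  unfolding L2norm_square using assms L2_scale[OF assms(2), of t] L2_add[OF assms(1) L2_scale[OF assms(2)]]
  by (simp add: L2inner_add_left L2inner_add_right L2inner_scale_left L2inner_scale_right
      L2inner_commute[of \<Omega> g f] power2_eq_square algebra_simps)

lemma L2norm_mono_AE:
  assumes "AE x in lebesgue_on \<Omega>. \<bar>f x\<bar> \<le> \<bar>g x\<bar>" "f \<in> L2 \<Omega>" "g \<in> L2 \<Omega>"
  shows "L2norm \<Omega> f \<le> L2norm \<Omega> g"
proof -
  have "AE x in lebesgue_on \<Omega>. (f x)\<^sup>2 \<le> (g x)\<^sup>2"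
    using assms(1) by eventually_elim (simp add: abs_le_square_iff)
  then show ?thesis
    unfolding L2norm_def by (intro real_sqrt_le_mono integral_mono_AE L2_integrable_square assms(2,3))
qed

lemma discriminant_le_of_nonneg_quadratic:
  fixes a b c :: real
  assumes nonneg: "\<And>t. 0 \<le> a - 2 * t * b + t\<^sup>2 * c" and "0 \<le> c"
  shows "b\<^sup>2 \<le> a * c"
proof (cases "c = 0")
  case True
  have "b = 0"
  proof (rule ccontr)
    assume "b \<noteq> 0"
    then have "2 * ((\<bar>a\<bar> + 1) / (2*b)) * b = \<bar>a\<bar> + 1" by (simp add: field_simps)
    then show False using nonneg[of "(\<bar>a\<bar> + 1) / (2*b)"] True by simp
  qed
  then show ?thesis using True by simp
next
  case False
  then have "c > 0" using \<open>0 \<le> c\<close> by simp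
  have "0 \<le> a - 2 * (b/c) * b + (b/c)\<^sup>2 * c" by (rule nonneg)
  also have "\<dots> = a - b\<^sup>2 / c" using \<open>c > 0\<close> by (simp add: field_simps power2_eq_square)
  finally show ?thesis using \<open>c > 0\<close> by (simp add: field_simps)
qed

lemma L2_Cauchy_Schwarz:
  assumes "f \<in> L2 \<Omega>" "g \<in> L2 \<Omega>"
  shows "\<bar>L2inner \<Omega> f g\<bar> \<le> L2norm \<Omega> f * L2norm \<Omega> g"
proof -
  have "0 \<le> L2inner \<Omega> f f - 2 * t * L2inner \<Omega> f g + t\<^sup>2 * L2inner \<Omega> g g" for t
    using L2norm_add_scale_square[OF assms, of "-t"] zero_le_power2[of "L2norm \<Omega> (\<lambda>x. f x + - t * g x)"]
    by (simp add: L2norm_square)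
  then have "(L2inner \<Omega> f g)\<^sup>2 \<le> L2inner \<Omega> f f * L2inner \<Omega> g g"
    by (rule discriminant_le_of_nonneg_quadratic) (rule L2inner_self_nonneg)
  also have "\<dots> = (L2norm \<Omega> f * L2norm \<Omega> g)\<^sup>2"
    by (simp add: L2norm_square power_mult_distrib)
  finally show ?thesis
    using L2norm_nonneg[of \<Omega> f] L2norm_nonneg[of \<Omega> g]
    by (metis abs_le_square_iff abs_of_nonneg mult_nonneg_nonneg)
qed

lemma L2norm_triangle:
  assumes "f \<in> L2 \<Omega>" "g \<in> L2 \<Omega>"
  shows "L2norm \<Omega> (\<lambda>x. f x + g x) \<le> L2norm \<Omega> f + L2norm \<Omega> g"
proof -
  have "(L2norm \<Omega> (\<lambda>x. f x + g x))\<^sup>2 = (L2norm \<Omega> f)\<^sup>2 + 2 * L2inner \<Omega> f g + (L2norm \<Omega> g)\<^sup>2"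
    using L2norm_add_scale_square[OF assms, of 1] by simp
  also have "\<dots> \<le> (L2norm \<Omega> f + L2norm \<Omega> g)\<^sup>2"
    using L2_Cauchy_Schwarz[OF assms] by (simp add: power2_sum)
  finally show ?thesis
    using L2norm_nonneg[of \<Omega> f] L2norm_nonneg[of \<Omega> g] by (meson add_nonneg_nonneg power2_le_imp_le)
qed

lemma L2norm_triangle_diff:
  assumes "f \<in> L2 \<Omega>" "g \<in> L2 \<Omega>" "h \<in> L2 \<Omega>"
  shows "L2norm \<Omega> (\<lambda>x. f x - h x) \<le> L2norm \<Omega> (\<lambda>x. f x - g x) + L2norm \<Omega> (\<lambda>x. g x - h x)"
  using L2norm_triangle[OF L2_diff[OF assms(1,2)] L2_diff[OF assms(2,3)]] by simp

lemma L2norm_minus_commute: "L2norm \<Omega> (\<lambda>x. f x - g x) = L2norm \<Omega> (\<lambda>x. g x - f x)"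
  by (simp add: L2norm_def power2_commute)

definition L2_opbound :: "'n::euclidean_space set \<Rightarrow> (('n \<Rightarrow> real) \<Rightarrow> 'y::real_normed_vector) \<Rightarrow> real"
  where "L2_opbound \<Omega> T = max 0 (SOME K. \<forall>f\<in>L2 \<Omega>. norm (T f) \<le> K * L2norm \<Omega> f)"

lemma L2_opbound_nonneg: "0 \<le> L2_opbound \<Omega> T"
  by (simp add: L2_opbound_def)

lemma norm_le_L2_opbound:
  assumes "bounded_linear_L2 \<Omega> T" "f \<in> L2 \<Omega>"
  shows "norm (T f) \<le> L2_opbound \<Omega> T * L2norm \<Omega> f"
proof -
  let ?K = "SOME K. \<forall>f\<in>L2 \<Omega>. norm (T f) \<le> K * L2norm \<Omega> f"
  have "\<exists>K. \<forall>f\<in>L2 \<Omega>. norm (T f) \<le> K * L2norm \<Omega> f"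
    using assms(1) by (simp add: bounded_linear_L2_def)
  then have "\<forall>f\<in>L2 \<Omega>. norm (T f) \<le> ?K * L2norm \<Omega> f" by (rule someI_ex)
  then have "norm (T f) \<le> ?K * L2norm \<Omega> f" using assms(2) by blast
  also have "\<dots> \<le> L2_opbound \<Omega> T * L2norm \<Omega> f"
    unfolding L2_opbound_def by (intro mult_right_mono L2norm_nonneg) simp
  finally show ?thesis .
qed

lemma bounded_linear_L2_lincomb:
  "bounded_linear_L2 \<Omega> T \<Longrightarrow> f \<in> L2 \<Omega> \<Longrightarrow> g \<in> L2 \<Omega> \<Longrightarrow>
    T (\<lambda>x. a * f x + b * g x) = a *\<^sub>R T f + b *\<^sub>R T g"
  unfolding bounded_linear_L2_def by blast

lemma bounded_linear_L2_diff:
  "bounded_linear_L2 \<Omega> T \<Longrightarrow> f \<in> L2 \<Omega> \<Longrightarrow> g \<in> L2 \<Omega> \<Longrightarrow> T (\<lambda>x. f x - g x) = T f - T g"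
  using bounded_linear_L2_lincomb[of \<Omega> T f g 1 "-1"] by simp

lemma adjoint_L2_in_L2: "is_adjoint_L2 \<Omega> T Tstar \<Longrightarrow> Tstar y \<in> L2 \<Omega>"
  by (simp add: is_adjoint_L2_def)

lemma adjoint_L2_inner:
  "is_adjoint_L2 \<Omega> T Tstar \<Longrightarrow> f \<in> L2 \<Omega> \<Longrightarrow> L2inner \<Omega> (Tstar y) f = inner (T f) y"
  by (simp add: is_adjoint_L2_def L2inner_commute)

section \<open>Projection onto the box constraints\<close>

definition clip :: "('n \<Rightarrow> real) \<Rightarrow> ('n \<Rightarrow> real) \<Rightarrow> ('n \<Rightarrow> real) \<Rightarrow> 'n \<Rightarrow> real" where
  "clip ua ub v = (\<lambda>x. max (ua x) (min (ub x) (v x)))"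

lemma clip_L2:
  assumes "ua \<in> L2 \<Omega>" "ub \<in> L2 \<Omega>" "v \<in> L2 \<Omega>"
  shows "clip ua ub v \<in> L2 \<Omega>"
proof -
  have m: "clip ua ub v \<in> borel_measurable (lebesgue_on \<Omega>)"
    unfolding clip_def using assms[THEN L2_borel_measurable] by measurable
  have "(clip ua ub v x)\<^sup>2 \<le> (\<bar>ua x\<bar> + \<bar>ub x\<bar>)\<^sup>2" for x
    unfolding abs_le_square_iff[symmetric] by (auto simp: clip_def)
  then have bound: "AE x in lebesgue_on \<Omega>. norm ((clip ua ub v x)\<^sup>2) \<le> norm ((\<bar>ua x\<bar> + \<bar>ub x\<bar>)\<^sup>2)"
    by (intro AE_I2) simp
  have "integrable (lebesgue_on \<Omega>) (\<lambda>x. (\<bar>ua x\<bar> + \<bar>ub x\<bar>)\<^sup>2)"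
    using assms(1,2) by (intro L2_integrable_square L2_add L2_abs)
  then have "integrable (lebesgue_on \<Omega>) (\<lambda>x. (clip ua ub v x)\<^sup>2)"
    by (rule Bochner_Integration.integrable_bound[OF _ _ bound]) (use m in measurable)
  then show ?thesis using m by (simp add: L2_def)
qed

lemma projU_minimizes:
  assumes "ua \<in> L2 \<Omega>" "ub \<in> L2 \<Omega>" "AE x in lebesgue_on \<Omega>. ua x \<le> ub x" "v \<in> L2 \<Omega>"
  shows "projU \<Omega> ua ub v \<in> Uad \<Omega> ua ub \<and>
      (\<forall>q\<in>Uad \<Omega> ua ub. L2norm \<Omega> (\<lambda>x. projU \<Omega> ua ub v x - v x) \<le> L2norm \<Omega> (\<lambda>x. q x - v x))"
  unfolding projU_def
proof (rule someI[of _ "clip ua ub v"], intro conjI ballI)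
  have cL: "clip ua ub v \<in> L2 \<Omega>" using clip_L2 assms by blast
  then show "clip ua ub v \<in> Uad \<Omega> ua ub"
    unfolding Uad_def using assms(3) by (auto simp: clip_def elim!: eventually_mono)
  fix q assume "q \<in> Uad \<Omega> ua ub"
  then have "q \<in> L2 \<Omega>" and q: "AE x in lebesgue_on \<Omega>. ua x \<le> q x \<and> q x \<le> ub x"
    by (auto simp: Uad_def)
  have "AE x in lebesgue_on \<Omega>. \<bar>clip ua ub v x - v x\<bar> \<le> \<bar>q x - v x\<bar>"
    using q by eventually_elim (auto simp: clip_def)
  then show "L2norm \<Omega> (\<lambda>x. clip ua ub v x - v x) \<le> L2norm \<Omega> (\<lambda>x. q x - v x)"
    using cL assms(4) \<open>q \<in> L2 \<Omega>\<close> by (intro L2norm_mono_AE L2_diff) auto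
qed

lemma Uad_L2: "u \<in> Uad \<Omega> ua ub \<Longrightarrow> u \<in> L2 \<Omega>"
  by (simp add: Uad_def)

lemma Uad_convex:
  assumes "p \<in> Uad \<Omega> ua ub" "q \<in> Uad \<Omega> ua ub" "0 \<le> t" "t \<le> 1"
  shows "(\<lambda>x. p x + t * (q x - p x)) \<in> Uad \<Omega> ua ub"
proof -
  have "(\<lambda>x. (1 - t) * p x + t * q x) \<in> L2 \<Omega>"
    using assms(1,2) by (intro L2_lincomb Uad_L2)
  moreover have "(\<lambda>x. (1 - t) * p x + t * q x) = (\<lambda>x. p x + t * (q x - p x))"
    by (auto simp: algebra_simps)
  moreover have "AE x in lebesgue_on \<Omega>. ua x \<le> p x \<and> p x \<le> ub x"
    "AE x in lebesgue_on \<Omega>. ua x \<le> q x \<and> q x \<le> ub x"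
    using assms by (auto simp: Uad_def)
  then have "AE x in lebesgue_on \<Omega>. ua x \<le> p x + t * (q x - p x) \<and> p x + t * (q x - p x) \<le> ub x"
  proof eventually_elim
    case (elim x)
    have "p x + t * (q x - p x) = (1 - t) * p x + t * q x" by (simp add: algebra_simps)
    moreover have "(1 - t) * ua x + t * ua x \<le> (1 - t) * p x + t * q x"
      using elim assms(3,4) by (intro add_mono mult_left_mono) auto
    moreover have "(1 - t) * p x + t * q x \<le> (1 - t) * ub x + t * ub x"
      using elim assms(3,4) by (intro add_mono mult_left_mono) auto
    ultimately show ?case by (simp add: algebra_simps)
  qed
  ultimately show ?thesis by (simp add: Uad_def)
qed

lemma nonneg_of_first_variation:
  fixes a N :: real
  assumes nonneg: "\<And>t. 0 < t \<Longrightarrow> t \<le> 1 \<Longrightarrow> 0 \<le> 2 * t * a + t\<^sup>2 * N" and "0 \<le> N"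
  shows "0 \<le> a"
proof (rule ccontr)
  assume "\<not> 0 \<le> a"
  define t where "t = min 1 (- a / (N + 1))"
  have "0 < t" "t \<le> 1" using \<open>\<not> 0 \<le> a\<close> \<open>0 \<le> N\<close> by (auto simp: t_def divide_neg_pos)
  have "t * N \<le> (- a / (N + 1)) * N" using \<open>0 \<le> N\<close> by (intro mult_right_mono) (auto simp: t_def)
  also have "\<dots> < - a" using \<open>\<not> 0 \<le> a\<close> \<open>0 \<le> N\<close> by (simp add: field_simps)
  finally have "t * (2 * a + t * N) < 0" using \<open>0 < t\<close> \<open>\<not> 0 \<le> a\<close> by (intro mult_pos_neg) auto
  then show False using nonneg[OF \<open>0 < t\<close> \<open>t \<le> 1\<close>] by (simp add: power2_eq_square algebra_simps)
qed

lemma Uad_minimizer_variational_inequality: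
  assumes pU: "p \<in> Uad \<Omega> ua ub" and vL: "v \<in> L2 \<Omega>" and qU: "q \<in> Uad \<Omega> ua ub"
    and min: "\<forall>q\<in>Uad \<Omega> ua ub. L2norm \<Omega> (\<lambda>x. p x - v x) \<le> L2norm \<Omega> (\<lambda>x. q x - v x)"
  shows "L2inner \<Omega> (\<lambda>x. v x - p x) (\<lambda>x. q x - p x) \<le> 0"
proof -
  have pL: "p \<in> L2 \<Omega>" and qL: "q \<in> L2 \<Omega>" using pU qU by (auto simp: Uad_L2)
  have aL: "(\<lambda>x. p x - v x) \<in> L2 \<Omega>" and bL: "(\<lambda>x. q x - p x) \<in> L2 \<Omega>"
    using pL qL vL by (auto intro: L2_diff)
  have "0 \<le> L2inner \<Omega> (\<lambda>x. p x - v x) (\<lambda>x. q x - p x)"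
  proof (rule nonneg_of_first_variation)
    fix t :: real assume "0 < t" "t \<le> 1"
    have "L2norm \<Omega> (\<lambda>x. p x - v x) \<le> L2norm \<Omega> (\<lambda>x. (p x + t * (q x - p x)) - v x)"
      using min Uad_convex[OF pU qU, of t] \<open>0 < t\<close> \<open>t \<le> 1\<close> by auto
    also have "(\<lambda>x. (p x + t * (q x - p x)) - v x) = (\<lambda>x. (p x - v x) + t * (q x - p x))"
      by (auto simp: algebra_simps)
    finally have "(L2norm \<Omega> (\<lambda>x. p x - v x))\<^sup>2 \<le> (L2norm \<Omega> (\<lambda>x. (p x - v x) + t * (q x - p x)))\<^sup>2"
      using L2norm_nonneg by (intro power_mono) auto
    then show "0 \<le> 2 * t * L2inner \<Omega> (\<lambda>x. p x - v x) (\<lambda>x. q x - p x) + t\<^sup>2 * (L2norm \<Omega> (\<lambda>x. q x - p x))\<^sup>2"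
      using L2norm_add_scale_square[OF aL bL, of t] by simp
  qed simp
  moreover have "L2inner \<Omega> (\<lambda>x. v x - p x) (\<lambda>x. q x - p x) = - L2inner \<Omega> (\<lambda>x. p x - v x) (\<lambda>x. q x - p x)"
    using pL vL bL by (simp add: L2inner_diff_left)
  ultimately show ?thesis by simp
qed

lemma projU_variational_inequality:
  assumes "ua \<in> L2 \<Omega>" "ub \<in> L2 \<Omega>" "AE x in lebesgue_on \<Omega>. ua x \<le> ub x" "v \<in> L2 \<Omega>"
    and "q \<in> Uad \<Omega> ua ub"
  shows "L2inner \<Omega> (\<lambda>x. v x - projU \<Omega> ua ub v x) (\<lambda>x. q x - projU \<Omega> ua ub v x) \<le> 0"
  using projU_minimizes[OF assms(1-4)] assms(4,5) by (intro Uad_minimizer_variational_inequality) auto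

lemma Uad_L2norm_le:
  assumes "u \<in> Uad \<Omega> ua ub" "ua \<in> L2 \<Omega>" "ub \<in> L2 \<Omega>"
  shows "L2norm \<Omega> u \<le> L2norm \<Omega> (\<lambda>x. \<bar>ua x\<bar> + \<bar>ub x\<bar>)"
proof (rule L2norm_mono_AE)
  show "AE x in lebesgue_on \<Omega>. \<bar>u x\<bar> \<le> \<bar>\<bar>ua x\<bar> + \<bar>ub x\<bar>\<bar>"
  proof -
    have "AE x in lebesgue_on \<Omega>. ua x \<le> u x \<and> u x \<le> ub x" using assms(1) by (simp add: Uad_def)
    then show ?thesis by eventually_elim auto
  qed
  show "u \<in> L2 \<Omega>" using assms(1) by (rule Uad_L2)
  show "(\<lambda>x. \<bar>ua x\<bar> + \<bar>ub x\<bar>) \<in> L2 \<Omega>" using assms(2,3) by (intro L2_add L2_abs)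
qed

lemma Uad_diff_L2norm_le:
  assumes "u \<in> Uad \<Omega> ua ub" "q \<in> Uad \<Omega> ua ub" "ua \<in> L2 \<Omega>" "ub \<in> L2 \<Omega>"
  shows "L2norm \<Omega> (\<lambda>x. u x - q x) \<le> 2 * L2norm \<Omega> (\<lambda>x. \<bar>ua x\<bar> + \<bar>ub x\<bar>)"
proof -
  have "L2norm \<Omega> (\<lambda>x. u x + (-1) * q x) \<le> L2norm \<Omega> u + L2norm \<Omega> (\<lambda>x. (-1) * q x)"
    using assms by (intro L2norm_triangle L2_scale Uad_L2)
  moreover have "L2norm \<Omega> (\<lambda>x. (-1) * q x) = L2norm \<Omega> q" by (simp add: L2norm_def)
  ultimately show ?thesis using Uad_L2norm_le[OF assms(1,3,4)] Uad_L2norm_le[OF assms(2,3,4)] by simp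
qed

section \<open>The Bregman distance of the box projection\<close>

definition bregman_dist :: "'n::euclidean_space set \<Rightarrow> ('n \<Rightarrow> real) \<Rightarrow> ('n \<Rightarrow> real) \<Rightarrow> ('n \<Rightarrow> real) \<Rightarrow> real"
  where "bregman_dist \<Omega> U P L =
    (1/2) * (L2norm \<Omega> (\<lambda>x. U x - P x))\<^sup>2 + L2inner \<Omega> P (\<lambda>x. U x - P x) - L2inner \<Omega> L (\<lambda>x. U x - P x)"

lemma bregman_dist_ge:
  assumes "U \<in> L2 \<Omega>" "P \<in> L2 \<Omega>" "L \<in> L2 \<Omega>"
    and "L2inner \<Omega> (\<lambda>x. L x - P x) (\<lambda>x. U x - P x) \<le> 0"
  shows "(1/2) * (L2norm \<Omega> (\<lambda>x. U x - P x))\<^sup>2 \<le> bregman_dist \<Omega> U P L"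
  using assms L2_diff[OF assms(1,2)] unfolding bregman_dist_def by (simp add: L2inner_diff_left)

lemma bregman_dist_change_le:
  assumes "U \<in> L2 \<Omega>" "P \<in> L2 \<Omega>" "Q \<in> L2 \<Omega>" "L \<in> L2 \<Omega>" "L' \<in> L2 \<Omega>"
    and "L2inner \<Omega> (\<lambda>x. L' x - Q x) (\<lambda>x. P x - Q x) \<le> 0"
  shows "bregman_dist \<Omega> U P L
    \<le> bregman_dist \<Omega> U Q L' - (L2inner \<Omega> L (\<lambda>x. U x - P x) - L2inner \<Omega> L' (\<lambda>x. U x - P x))"
  using assms L2_diff[OF assms(1,2)] L2_diff[OF assms(1,3)] L2_diff[OF assms(2,3)]
    L2_diff[OF assms(4,2)] L2_diff[OF assms(5,3)] L2inner_self_nonneg[of \<Omega> "\<lambda>x. P x - Q x"]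
  unfolding bregman_dist_def L2norm_square
  by (simp add: L2inner_diff_left L2inner_diff_right L2inner_commute[of \<Omega> P U]
      L2inner_commute[of \<Omega> Q U] L2inner_commute[of \<Omega> Q P] field_simps)

lemma bregman_dist_le_source:
  assumes "U \<in> L2 \<Omega>" "P \<in> L2 \<Omega>" "L \<in> L2 \<Omega>" "X \<in> L2 \<Omega>"
    and "L2inner \<Omega> (\<lambda>x. X x - U x) (\<lambda>x. P x - U x) \<le> 0"
  shows "bregman_dist \<Omega> U P L \<le> L2inner \<Omega> X (\<lambda>x. U x - P x) - L2inner \<Omega> L (\<lambda>x. U x - P x)"
  using assms L2_diff[OF assms(1,2)] L2_diff[OF assms(2,1)] L2_diff[OF assms(4,1)]
    L2inner_self_nonneg[of \<Omega> "\<lambda>x. U x - P x"]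
  unfolding bregman_dist_def L2norm_square
  by (simp add: L2inner_diff_left L2inner_diff_right L2inner_commute[of \<Omega> P U]
      L2inner_commute[of \<Omega> X U] L2inner_commute[of \<Omega> X P] field_simps)

lemma inner_add_half_norm_square_le:
  fixes x a :: "'a::real_inner"
  shows "inner a x + (1/2) * (norm x)\<^sup>2 \<le> (1/2) * (norm (x + a))\<^sup>2"
proof -
  have "(norm (x + a))\<^sup>2 = (norm x)\<^sup>2 + 2 * inner a x + (norm a)\<^sup>2"
    by (simp add: power2_norm_eq_inner inner_add inner_commute)
  then show ?thesis using zero_le_power2[of "norm a"] by linarith
qed

lemma norm_add_scaleR_square:
  fixes a b :: "'a::real_inner"
  shows "(norm (a + s *\<^sub>R b))\<^sup>2 = (norm a)\<^sup>2 + 2 * s * inner a b + s\<^sup>2 * (norm b)\<^sup>2"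
  unfolding power2_norm_eq_inner
  by (simp add: inner_add_left inner_add_right inner_commute[of b a] power2_eq_square algebra_simps)

lemma le_of_square_le_linear:
  fixes A B X :: real
  assumes "0 \<le> A" "0 \<le> B" "X\<^sup>2 \<le> 2 * B + 2 * A * X"
  shows "X \<le> 2 * A + sqrt (2 * B)"
proof (rule ccontr)
  assume "\<not> ?thesis"
  then have X: "2 * A + sqrt (2 * B) < X" by simp
  have s: "0 \<le> sqrt (2 * B)" using assms(2) by simp
  have "(2 * A + sqrt (2 * B)) * sqrt (2 * B) \<le> X * sqrt (2 * B)"
    using X s by (intro mult_right_mono) auto
  also have "\<dots> < X * (X - 2 * A)"
    using X s assms(1) by (intro mult_strict_left_mono) linarith+
  finally have "2 * A * sqrt (2 * B) + 2 * B < X\<^sup>2 - 2 * A * X"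
    using assms(2) by (simp add: power2_eq_square algebra_simps)
  then show False using assms mult_nonneg_nonneg[OF _ s, of "2 * A"] by linarith
qed

lemma discrete_Bihari_inequality:
  fixes F x a b :: "nat \<Rightarrow> real" and K :: nat
  assumes step: "\<And>k. F (Suc k) \<le> F k + a (Suc k) * x (Suc k) + b (Suc k)"
    and x_le: "\<And>k. (x k)\<^sup>2 \<le> 2 * F k" and x_nonneg: "\<And>k. 0 \<le> x k"
    and a_nonneg: "\<And>k. 0 \<le> a k" and b_nonneg: "\<And>k. 0 \<le> b k"
  defines "A \<equiv> \<Sum>k=1..K. a k" and "B \<equiv> F 0 + (\<Sum>k=1..K. b k)"
  shows "F K \<le> B + A * (2 * A + sqrt (2 * B))"
proof -
  define X where "X = Max (x ` {0..K})"
  have "X \<in> x ` {0..K}" unfolding X_def by (rule Max_in) auto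
  then obtain j0 where "j0 \<le> K" "X = x j0" by auto
  have x_le_X: "x j \<le> X" if "j \<le> K" for j
    unfolding X_def using that by (intro Max_ge) auto
  have "0 \<le> A" unfolding A_def using a_nonneg by (simp add: sum_nonneg)
  have "0 \<le> F 0" using x_le[of 0] zero_le_power2[of "x 0"] by linarith
  then have "0 \<le> B" unfolding B_def using b_nonneg by (simp add: sum_nonneg)
  have telescope: "F j \<le> F 0 + (\<Sum>k=1..j. a k * x k) + (\<Sum>k=1..j. b k)" for j
  proof (induction j)
    case (Suc j)
    then show ?case using step[of j] by simp
  qed simp
  have F_le: "F j \<le> B + A * X" if "j \<le> K" for j
  proof -
    have "(\<Sum>k=1..j. a k * x k) \<le> (\<Sum>k=1..j. a k) * X"
      unfolding sum_distrib_right using that by (intro sum_mono mult_left_mono x_le_X a_nonneg) auto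
    also have "\<dots> \<le> A * X"
      unfolding A_def using that a_nonneg x_le_X[of 0] x_nonneg[of 0]
      by (intro mult_right_mono sum_mono2) auto
    moreover have "(\<Sum>k=1..j. b k) \<le> (\<Sum>k=1..K. b k)"
      using that b_nonneg by (intro sum_mono2) auto
    ultimately show ?thesis using telescope[of j] unfolding B_def by linarith
  qed
  have "X \<le> 2 * A + sqrt (2 * B)"
    using \<open>0 \<le> A\<close> \<open>0 \<le> B\<close> x_le[of j0] F_le[OF \<open>j0 \<le> K\<close>] \<open>X = x j0\<close>
    by (intro le_of_square_le_linear) auto
  then show ?thesis using F_le[of K] \<open>0 \<le> A\<close> mult_left_mono by fastforce
qed

lemma Bihari_bound_mono:
  fixes A B A' B' :: real
  assumes "0 \<le> A" "0 \<le> B" "A \<le> A'" "B \<le> B'"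
  shows "B + A * (2 * A + sqrt (2 * B)) \<le> B' + A' * (2 * A' + sqrt (2 * B'))"
proof -
  have "2 * A + sqrt (2 * B) \<le> 2 * A' + sqrt (2 * B')"
    using assms(3,4) real_sqrt_le_mono[of "2 * B" "2 * B'"] by linarith
  then have "A * (2 * A + sqrt (2 * B)) \<le> A' * (2 * A' + sqrt (2 * B'))"
    using assms by (intro mult_mono) auto
  then show ?thesis using assms(4) by linarith
qed

text \<open>The cap 1/h only serves to make the index set finite.\<close>

definition stop_index :: "(real \<Rightarrow> real) \<Rightarrow> (nat \<Rightarrow> real) \<Rightarrow> real \<Rightarrow> nat" where
  "stop_index d \<Gamma> h = Max {k. k \<le> nat \<lfloor>1/h\<rfloor> \<and> d h * \<Gamma> k \<le> sqrt (d h)}"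

lemma stop_index_le_sqrt:
  assumes "0 \<le> d h" "\<Gamma> 0 = 0"
  shows "d h * \<Gamma> (stop_index d \<Gamma> h) \<le> sqrt (d h)"
proof -
  let ?A = "{k. k \<le> nat \<lfloor>1/h\<rfloor> \<and> d h * \<Gamma> k \<le> sqrt (d h)}"
  have "finite ?A" by (rule finite_subset[of _ "{..nat \<lfloor>1/h\<rfloor>}"]) auto
  moreover have "0 \<in> ?A" using assms by simp
  ultimately have "stop_index d \<Gamma> h \<in> ?A" unfolding stop_index_def by (intro Max_in) auto
  then show ?thesis by simp
qed

lemma stop_index_tendsto:
  assumes d_lim: "(d \<longlongrightarrow> 0) (at_right 0)" and d_nonneg: "\<And>h. 0 < h \<Longrightarrow> 0 \<le> d h"
    and \<Gamma>_nonneg: "\<And>k. 0 \<le> \<Gamma> k"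
  shows "filterlim (stop_index d \<Gamma>) at_top (at_right 0)"
  unfolding filterlim_at_top
proof
  fix N :: nat
  define c where "c = 1 / (\<Gamma> N + 1)"
  have "0 < c" using \<Gamma>_nonneg[of N] by (simp add: c_def)
  have "eventually (\<lambda>h. d h < c\<^sup>2) (at_right 0)"
    using order_tendstoD(2)[OF d_lim, of "c\<^sup>2"] \<open>0 < c\<close> by simp
  moreover have "eventually (\<lambda>h. 0 < h \<and> h < 1 / (real N + 1)) (at_right 0)"
    unfolding eventually_at_right_field by (intro exI[of _ "1 / (real N + 1)"]) auto
  ultimately show "eventually (\<lambda>h. N \<le> stop_index d \<Gamma> h) (at_right 0)"
  proof eventually_elim
    case (elim h)
    let ?A = "{k. k \<le> nat \<lfloor>1/h\<rfloor> \<and> d h * \<Gamma> k \<le> sqrt (d h)}"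
    have "0 \<le> d h" using d_nonneg elim by simp
    have "real N + 1 < 1 / h" using elim by (simp add: field_simps)
    then have "N \<le> nat \<lfloor>1/h\<rfloor>" by linarith
    have "sqrt (d h) < c" using elim \<open>0 < c\<close> \<open>0 \<le> d h\<close> by (metis real_sqrt_less_mono real_sqrt_abs abs_of_pos)
    then have "sqrt (d h) * \<Gamma> N \<le> c * \<Gamma> N" using \<Gamma>_nonneg[of N] by (intro mult_right_mono) auto
    also have "\<dots> \<le> 1" using \<Gamma>_nonneg[of N] by (simp add: c_def field_simps)
    finally have "sqrt (d h) * (sqrt (d h) * \<Gamma> N) \<le> sqrt (d h)"
      using \<open>0 \<le> d h\<close> by (metis mult_left_mono mult.right_neutral real_sqrt_ge_zero)
    then have "d h * \<Gamma> N \<le> sqrt (d h)" using \<open>0 \<le> d h\<close> by (simp add: mult.assoc[symmetric])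
    moreover have "finite ?A" by (rule finite_subset[of _ "{..nat \<lfloor>1/h\<rfloor>}"]) auto
    ultimately show ?case unfolding stop_index_def using \<open>N \<le> nat \<lfloor>1/h\<rfloor>\<close> by (intro Max_ge) auto
  qed
qed

section \<open>The inexact Bregman iteration\<close>

locale inexact_bregman =
  fixes \<Omega> :: "'n::euclidean_space set"
    and S :: "('n \<Rightarrow> real) \<Rightarrow> 'y::real_inner"
    and Sstar :: "'y \<Rightarrow> ('n \<Rightarrow> real)"
    and Sh :: "real \<Rightarrow> ('n \<Rightarrow> real) \<Rightarrow> 'y"
    and Shstar :: "real \<Rightarrow> 'y \<Rightarrow> ('n \<Rightarrow> real)"
    and z :: 'y and ua ub udag :: "'n \<Rightarrow> real" and w :: 'y
    and \<delta> :: "real \<Rightarrow> real"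
    and \<alpha> \<epsilon> :: "nat \<Rightarrow> real" and hmax :: real
    and uin :: "real \<Rightarrow> nat \<Rightarrow> ('n \<Rightarrow> real)"
  assumes ua_L2: "ua \<in> L2 \<Omega>" and ub_L2: "ub \<in> L2 \<Omega>"
    and uab: "AE x in lebesgue_on \<Omega>. ua x \<le> ub x"
    and S_lin: "bounded_linear_L2 \<Omega> S" and S_adj: "is_adjoint_L2 \<Omega> S Sstar"
    and Sh_adj: "\<And>h. h > 0 \<Longrightarrow> is_adjoint_L2 \<Omega> (Sh h) (Shstar h)"
    and \<delta>_mono: "mono_on {0..} \<delta>" and \<delta>_nonneg: "\<And>h. h \<ge> 0 \<Longrightarrow> \<delta> h \<ge> 0"
    and \<delta>_est: "\<And>h u. h > 0 \<Longrightarrow> u \<in> Uad \<Omega> ua ub \<Longrightarrow>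
        norm (S u - Sh h u) + L2norm \<Omega> (\<lambda>x. Sstar (Sh h u - z) x - Shstar h (Sh h u - z) x) \<le> \<delta> h"
    and \<alpha>_pos: "\<And>k. k \<ge> 1 \<Longrightarrow> \<alpha> k > 0"
    and \<alpha>_bdd: "\<exists>B. \<forall>k\<ge>1. \<alpha> k \<le> B"
    and udag_sol: "udag \<in> Uad \<Omega> ua ub"
    and udag_min: "\<And>u. u \<in> Uad \<Omega> ua ub \<Longrightarrow>
        (1/2) * (norm (S udag - z))\<^sup>2 \<le> (1/2) * (norm (S u - z))\<^sup>2"
    and source: "AE x in lebesgue_on \<Omega>. udag x = projU \<Omega> ua ub (Sstar w) x"
    and \<epsilon>_pos: "\<And>k. k \<ge> 1 \<Longrightarrow> \<epsilon> k > 0"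
    and R_sum: "summable (\<lambda>j. let i = Suc j in
        \<epsilon> i / \<alpha> i + (\<epsilon> i)\<^sup>2 / (\<alpha> i)\<^sup>2 + gammaB \<alpha> (i - 1) * \<epsilon> i / \<alpha> i + (\<epsilon> i)\<^sup>2 / \<alpha> i)"
    and hmax_pos: "hmax > 0"
    and algU: "\<And>h k. 0 < h \<Longrightarrow> h \<le> hmax \<Longrightarrow> k \<ge> 1 \<Longrightarrow> uin h k \<in> Uad \<Omega> ua ub"
    and algB: "\<And>h k. 0 < h \<Longrightarrow> h \<le> hmax \<Longrightarrow> k \<ge> 1 \<Longrightarrow>
        breg \<Omega> ua ub (Sh h) (Shstar h) z (\<alpha> k) (lamB \<alpha> (Sh h) (Shstar h) z (uin h) (k - 1)) (uin h k)
          \<le> \<epsilon> k"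
begin

abbreviation cS :: real where "cS \<equiv> L2_opbound \<Omega> S"

abbreviation cU :: real where "cU \<equiv> L2norm \<Omega> (\<lambda>x. \<bar>ua x\<bar> + \<bar>ub x\<bar>)"

lemma Sstar_L2: "Sstar y \<in> L2 \<Omega>"
  using S_adj by (rule adjoint_L2_in_L2)

lemma Shstar_L2: "h > 0 \<Longrightarrow> Shstar h y \<in> L2 \<Omega>"
  using Sh_adj by (rule adjoint_L2_in_L2)

lemma udag_L2: "udag \<in> L2 \<Omega>"
  using udag_sol by (rule Uad_L2)

lemma uin_L2: "0 < h \<Longrightarrow> h \<le> hmax \<Longrightarrow> k \<ge> 1 \<Longrightarrow> uin h k \<in> L2 \<Omega>"
  using algU by (rule Uad_L2)

lemma S_diff: "f \<in> L2 \<Omega> \<Longrightarrow> g \<in> L2 \<Omega> \<Longrightarrow> S (\<lambda>x. f x - g x) = S f - S g"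
  using S_lin by (rule bounded_linear_L2_diff)

lemma norm_S_le: "f \<in> L2 \<Omega> \<Longrightarrow> norm (S f) \<le> cS * L2norm \<Omega> f"
  using S_lin by (rule norm_le_L2_opbound)

lemma Uad_dist_le: "u \<in> Uad \<Omega> ua ub \<Longrightarrow> q \<in> Uad \<Omega> ua ub \<Longrightarrow> L2norm \<Omega> (\<lambda>x. u x - q x) \<le> 2 * cU"
  by (rule Uad_diff_L2norm_le[OF _ _ ua_L2 ub_L2])

lemma cU_nonneg: "0 \<le> cU"
  by (rule L2norm_nonneg)

definition \<tau> :: "nat \<Rightarrow> real" where "\<tau> k = 1 / \<alpha> k"

lemma \<tau>_pos: "k \<ge> 1 \<Longrightarrow> \<tau> k > 0"
  using \<alpha>_pos by (simp add: \<tau>_def)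

lemma gammaB_0: "gammaB \<alpha> 0 = 0"
  by (simp add: gammaB_def)

lemma gammaB_Suc: "gammaB \<alpha> (Suc k) = gammaB \<alpha> k + \<tau> (Suc k)"
  by (simp add: gammaB_def \<tau>_def)

lemma gammaB_nonneg: "0 \<le> gammaB \<alpha> k"
  unfolding gammaB_def using \<alpha>_pos by (intro sum_nonneg) (auto simp: less_imp_le)

lemma gammaB_pos: "k \<ge> 1 \<Longrightarrow> 0 < gammaB \<alpha> k"
  using gammaB_Suc[of "k - 1"] \<tau>_pos[of k] gammaB_nonneg[of "k - 1"] by simp

lemma gammaB_le_Suc: "gammaB \<alpha> k \<le> gammaB \<alpha> (Suc k)"
  using gammaB_Suc[of k] \<tau>_pos[of "Suc k"] by simp

definition lam :: "real \<Rightarrow> nat \<Rightarrow> 'n \<Rightarrow> real" where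
  "lam h k = lamB \<alpha> (Sh h) (Shstar h) z (uin h) k"

definition p :: "real \<Rightarrow> nat \<Rightarrow> 'n \<Rightarrow> real" where
  "p h k = projU \<Omega> ua ub (lam h k)"

definition D :: "real \<Rightarrow> nat \<Rightarrow> real" where
  "D h k = bregman_dist \<Omega> udag (p h k) (lam h k)"

definition err :: "real \<Rightarrow> nat \<Rightarrow> 'n \<Rightarrow> real" where
  "err h k = (\<lambda>x. udag x - p h k x)"

definition res :: 'y where "res = z - S udag"

definition \<sigma> :: "real \<Rightarrow> nat \<Rightarrow> 'y" where "\<sigma> h i = S udag - S (uin h i)"

definition W :: "real \<Rightarrow> nat \<Rightarrow> 'y" where "W h k = (\<Sum>i=1..k. \<tau> i *\<^sub>R \<sigma> h i)"

lemma lam_L2: "h > 0 \<Longrightarrow> lam h k \<in> L2 \<Omega>"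
  unfolding lam_def lamB_def by (intro L2_sum Shstar_L2) auto

lemma lam_Suc:
  "lam h (Suc k) = (\<lambda>x. \<tau> (Suc k) * Shstar h (z - Sh h (uin h (Suc k))) x + lam h k x)"
  by (simp add: lam_def lamB_def \<tau>_def add.commute)

lemma p_Uad: "h > 0 \<Longrightarrow> p h k \<in> Uad \<Omega> ua ub"
  unfolding p_def using projU_minimizes[OF ua_L2 ub_L2 uab lam_L2] by blast

lemma p_L2: "h > 0 \<Longrightarrow> p h k \<in> L2 \<Omega>"
  using p_Uad by (rule Uad_L2)

lemma err_L2: "h > 0 \<Longrightarrow> err h k \<in> L2 \<Omega>"
  unfolding err_def by (intro L2_diff udag_L2 p_L2)

lemma p_variational_inequality: "h > 0 \<Longrightarrow> q \<in> Uad \<Omega> ua ub \<Longrightarrow>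
    L2inner \<Omega> (\<lambda>x. lam h k x - p h k x) (\<lambda>x. q x - p h k x) \<le> 0"
  unfolding p_def by (intro projU_variational_inequality ua_L2 ub_L2 uab lam_L2)

lemma uin_near_p:
  assumes h: "0 < h" "h \<le> hmax" and k: "k \<ge> 1"
  shows "L2norm \<Omega> (\<lambda>x. uin h k x - p h k x) \<le> \<epsilon> k"
proof -
  obtain j where j: "k = Suc j" using k by (cases k) auto
  have "(\<lambda>x. 1 / \<alpha> k * Shstar h (z - Sh h (uin h k)) x + lamB \<alpha> (Sh h) (Shstar h) z (uin h) (k - 1) x)
      = lam h k"
    using lam_Suc[of h j] j by (simp add: lam_def \<tau>_def)
  then have "breg \<Omega> ua ub (Sh h) (Shstar h) z (\<alpha> k) (lamB \<alpha> (Sh h) (Shstar h) z (uin h) (k - 1)) (uin h k)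
      = (1 + 1 / \<alpha> k) * L2norm \<Omega> (\<lambda>x. uin h k x - p h k x)"
    by (simp add: breg_def p_def)
  moreover have "L2norm \<Omega> (\<lambda>x. uin h k x - p h k x) \<le> (1 + 1 / \<alpha> k) * L2norm \<Omega> (\<lambda>x. uin h k x - p h k x)"
    using \<alpha>_pos[OF k] L2norm_nonneg[of \<Omega> "\<lambda>x. uin h k x - p h k x"] by (simp add: algebra_simps)
  ultimately show ?thesis using algB[OF h k] by linarith
qed

lemma S_uin_near_S_p:
  assumes h: "0 < h" "h \<le> hmax" and k: "k \<ge> 1"
  shows "norm (S (uin h k) - S (p h k)) \<le> cS * \<epsilon> k"
proof -
  have "norm (S (uin h k) - S (p h k)) = norm (S (\<lambda>x. uin h k x - p h k x))"
    using S_diff[OF uin_L2[OF h k] p_L2[OF h(1)]] by simp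
  also have "\<dots> \<le> cS * L2norm \<Omega> (\<lambda>x. uin h k x - p h k x)"
    using uin_L2[OF h k] p_L2[OF h(1)] by (intro norm_S_le L2_diff)
  also have "\<dots> \<le> cS * \<epsilon> k"
    using uin_near_p[OF h k] L2_opbound_nonneg by (rule mult_left_mono)
  finally show ?thesis .
qed

lemma S_err_eq: "0 < h \<Longrightarrow> S (err h k) = \<sigma> h k + (S (uin h k) - S (p h k))"
  unfolding err_def \<sigma>_def using S_diff[OF udag_L2 p_L2] by simp

lemma err_L2norm_le: "h > 0 \<Longrightarrow> L2norm \<Omega> (err h k) \<le> 2 * cU"
  unfolding err_def by (intro Uad_dist_le udag_sol p_Uad)

lemma \<sigma>_norm_le:
  assumes h: "0 < h" "h \<le> hmax" and k: "k \<ge> 1"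
  shows "norm (\<sigma> h k) \<le> cS * (2 * cU)"
proof -
  have "norm (\<sigma> h k) = norm (S (\<lambda>x. udag x - uin h k x))"
    unfolding \<sigma>_def using S_diff[OF udag_L2 uin_L2[OF h k]] by simp
  also have "\<dots> \<le> cS * L2norm \<Omega> (\<lambda>x. udag x - uin h k x)"
    using udag_L2 uin_L2[OF h k] by (intro norm_S_le L2_diff)
  also have "\<dots> \<le> cS * (2 * cU)"
    using Uad_dist_le[OF udag_sol algU[OF h k]] L2_opbound_nonneg by (rule mult_left_mono)
  finally show ?thesis .
qed

lemma discretization_inner_error:
  assumes h: "h > 0" and u: "u \<in> Uad \<Omega> ua ub" and v: "v \<in> L2 \<Omega>"
  shows "\<bar>L2inner \<Omega> (Shstar h (z - Sh h u)) v - inner (S v) (z - S u)\<bar> \<le> (1 + cS) * \<delta> h * L2norm \<Omega> v"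
proof -
  let ?y = "Sh h u - z"
  let ?d = "\<lambda>x. Sstar ?y x - Shstar h ?y x"
  have dL: "?d \<in> L2 \<Omega>" using h by (intro L2_diff Sstar_L2 Shstar_L2)
  have e: "norm (S u - Sh h u) + L2norm \<Omega> ?d \<le> \<delta> h" using \<delta>_est[OF h u] .
  have "L2inner \<Omega> (Shstar h (z - Sh h u)) v = - L2inner \<Omega> (Shstar h ?y) v"
    using adjoint_L2_inner[OF Sh_adj[OF h] v, of "z - Sh h u"] adjoint_L2_inner[OF Sh_adj[OF h] v, of ?y]
    by (simp add: inner_diff_right)
  also have "L2inner \<Omega> (Shstar h ?y) v = L2inner \<Omega> (Sstar ?y) v - L2inner \<Omega> ?d v"
    using L2inner_diff_left[OF Sstar_L2 Shstar_L2[OF h] v] by simp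
  also have "L2inner \<Omega> (Sstar ?y) v = inner (S v) ?y"
    by (rule adjoint_L2_inner[OF S_adj v])
  finally have "L2inner \<Omega> (Shstar h (z - Sh h u)) v - inner (S v) (z - S u)
      = L2inner \<Omega> ?d v + inner (S v) (S u - Sh h u)"
    by (simp add: inner_diff_right algebra_simps)
  also have "\<bar>\<dots>\<bar> \<le> L2norm \<Omega> ?d * L2norm \<Omega> v + norm (S v) * norm (S u - Sh h u)"
    using L2_Cauchy_Schwarz[OF dL v] Cauchy_Schwarz_ineq2[of "S v" "S u - Sh h u"] by linarith
  also have "\<dots> \<le> \<delta> h * L2norm \<Omega> v + (cS * L2norm \<Omega> v) * \<delta> h"
  proof (intro add_mono mult_right_mono mult_mono)
    show "L2norm \<Omega> ?d \<le> \<delta> h" using e norm_ge_zero[of "S u - Sh h u"] by linarith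
    show "norm (S u - Sh h u) \<le> \<delta> h" using e L2norm_nonneg[of \<Omega> ?d] by linarith
  qed (auto simp: norm_S_le v L2norm_nonneg L2_opbound_nonneg)
  finally show ?thesis by (simp add: algebra_simps)
qed

lemma lam_inner_approx:
  assumes h: "0 < h" "h \<le> hmax" and f: "f \<in> L2 \<Omega>"
  shows "\<bar>L2inner \<Omega> (lam h k) f - (\<Sum>i=1..k. \<tau> i * inner (S f) (z - S (uin h i)))\<bar>
     \<le> (1 + cS) * \<delta> h * L2norm \<Omega> f * gammaB \<alpha> k"
proof (induction k)
  case 0
  then show ?case by (simp add: lam_def lamB_def L2inner_def gammaB_0)
next
  case (Suc k)
  let ?a = "L2inner \<Omega> (Shstar h (z - Sh h (uin h (Suc k)))) f"
  let ?b = "inner (S f) (z - S (uin h (Suc k)))"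
  have "\<bar>?a - ?b\<bar> \<le> (1 + cS) * \<delta> h * L2norm \<Omega> f"
    using discretization_inner_error[OF h(1) algU[OF h] f] by simp
  then have "\<bar>\<tau> (Suc k) * (?a - ?b)\<bar> \<le> \<tau> (Suc k) * ((1 + cS) * \<delta> h * L2norm \<Omega> f)"
    using \<tau>_pos[of "Suc k"] by (simp add: abs_mult)
  moreover have "L2inner \<Omega> (lam h (Suc k)) f = \<tau> (Suc k) * ?a + L2inner \<Omega> (lam h k) f"
    unfolding lam_Suc using h by (intro L2inner_scale_add_left Shstar_L2 lam_L2 f)
  ultimately show ?case using Suc.IH by (simp add: gammaB_Suc algebra_simps abs_le_iff)
qed

lemma weighted_residual_sum:
  "(\<Sum>i=1..k. \<tau> i * inner y (z - S (uin h i))) = gammaB \<alpha> k * inner y res + inner y (W h k)"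
proof -
  have "(\<Sum>i=1..k. \<tau> i * inner y (z - S (uin h i))) = (\<Sum>i=1..k. \<tau> i * inner y res + inner y (\<tau> i *\<^sub>R \<sigma> h i))"
    by (intro sum.cong) (auto simp: res_def \<sigma>_def inner_diff_right algebra_simps)
  also have "\<dots> = gammaB \<alpha> k * inner y res + inner y (W h k)"
    by (simp add: sum.distrib W_def inner_sum_right sum_distrib_right gammaB_def \<tau>_def)
  finally show ?thesis .
qed

lemma optimality_condition:
  assumes q: "q \<in> Uad \<Omega> ua ub"
  shows "inner res (S q - S udag) \<le> 0"
proof -
  let ?a = "S udag - z" and ?b = "S q - S udag"
  have "0 \<le> inner ?a ?b"
  proof (rule nonneg_of_first_variation)
    fix s :: real assume s: "0 < s" "s \<le> 1"
    have "(\<lambda>x. udag x + s * (q x - udag x)) = (\<lambda>x. (1 - s) * udag x + s * q x)"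
      by (auto simp: algebra_simps)
    then have "S (\<lambda>x. udag x + s * (q x - udag x)) = (1 - s) *\<^sub>R S udag + s *\<^sub>R S q"
      using bounded_linear_L2_lincomb[OF S_lin udag_L2 Uad_L2[OF q]] by simp
    then have Su: "S (\<lambda>x. udag x + s * (q x - udag x)) - z = ?a + s *\<^sub>R ?b"
      by (simp add: algebra_simps)
    have "(1/2) * (norm ?a)\<^sup>2 \<le> (1/2) * (norm (S (\<lambda>x. udag x + s * (q x - udag x)) - z))\<^sup>2"
      using s by (intro udag_min Uad_convex udag_sol q) auto
    then have "(norm ?a)\<^sup>2 \<le> (norm (?a + s *\<^sub>R ?b))\<^sup>2"
      unfolding Su by simp
    then show "0 \<le> 2 * s * inner ?a ?b + s\<^sup>2 * (norm ?b)\<^sup>2"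
      by (simp add: norm_add_scaleR_square)
  qed simp
  then show ?thesis by (simp add: res_def inner_diff_left inner_diff_right inner_commute)
qed

lemma S_err_inner_res_nonneg: "h > 0 \<Longrightarrow> 0 \<le> inner (S (err h k)) res"
  using optimality_condition[OF p_Uad] S_diff[OF udag_L2 p_L2]
  by (simp add: err_def inner_commute inner_diff_right inner_diff_left)

lemma source_variational_inequality:
  assumes q: "q \<in> Uad \<Omega> ua ub"
  shows "L2inner \<Omega> (\<lambda>x. Sstar w x - udag x) (\<lambda>x. q x - udag x) \<le> 0"
proof -
  let ?P = "projU \<Omega> ua ub (Sstar w)"
  have PL: "?P \<in> L2 \<Omega>" using projU_minimizes[OF ua_L2 ub_L2 uab Sstar_L2] Uad_L2 by blast
  have "L2inner \<Omega> (\<lambda>x. Sstar w x - ?P x) (\<lambda>x. q x - ?P x)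
      = L2inner \<Omega> (\<lambda>x. Sstar w x - udag x) (\<lambda>x. q x - udag x)"
  proof (rule L2inner_cong_AE)
    show "AE x in lebesgue_on \<Omega>. Sstar w x - ?P x = Sstar w x - udag x"
      "AE x in lebesgue_on \<Omega>. q x - ?P x = q x - udag x"
      using source by (eventually_elim, simp)+
  qed (intro L2_diff Sstar_L2 PL udag_L2 Uad_L2[OF q])+
  then show ?thesis using projU_variational_inequality[OF ua_L2 ub_L2 uab Sstar_L2[of w] q] by simp
qed

lemma D_ge: "h > 0 \<Longrightarrow> (1/2) * (L2norm \<Omega> (err h k))\<^sup>2 \<le> D h k"
  unfolding D_def err_def by (intro bregman_dist_ge udag_L2 p_L2 lam_L2 p_variational_inequality udag_sol)

lemma D_nonneg: "h > 0 \<Longrightarrow> 0 \<le> D h k"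
  using D_ge[of h k] zero_le_power2[of "L2norm \<Omega> (err h k)"] by linarith

lemma D_le_source:
  assumes h: "0 < h" "h \<le> hmax" and k: "k \<ge> 1"
  shows "D h k \<le> inner (\<sigma> h k) (w - W h k) + cS * \<epsilon> k * norm (w - W h k)
    + 2 * cU * (1 + cS) * \<delta> h * gammaB \<alpha> k"
proof -
  let ?e = "err h k"
  have eL: "?e \<in> L2 \<Omega>" using err_L2 h by simp
  have "D h k \<le> L2inner \<Omega> (Sstar w) ?e - L2inner \<Omega> (lam h k) ?e"
    unfolding D_def err_def using h
    by (intro bregman_dist_le_source udag_L2 p_L2 lam_L2 Sstar_L2 source_variational_inequality p_Uad)
  moreover have "L2inner \<Omega> (Sstar w) ?e = inner (S ?e) w"
    by (rule adjoint_L2_inner[OF S_adj eL])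
  moreover have "- L2inner \<Omega> (lam h k) ?e \<le> - (gammaB \<alpha> k * inner (S ?e) res + inner (S ?e) (W h k))
      + (1 + cS) * \<delta> h * L2norm \<Omega> ?e * gammaB \<alpha> k"
    using lam_inner_approx[OF h eL, of k] weighted_residual_sum[where k=k and y="S ?e" and h=h] by (simp add: abs_le_iff)
  moreover have "0 \<le> gammaB \<alpha> k * inner (S ?e) res"
    using S_err_inner_res_nonneg[OF h(1)] gammaB_nonneg by simp
  moreover have "(1 + cS) * \<delta> h * L2norm \<Omega> ?e * gammaB \<alpha> k \<le> (1 + cS) * \<delta> h * (2 * cU) * gammaB \<alpha> k"
    using err_L2norm_le[OF h(1)] L2_opbound_nonneg[of \<Omega> S] \<delta>_nonneg[of h] h gammaB_nonneg
    by (intro mult_right_mono mult_left_mono mult_nonneg_nonneg) auto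
  moreover have "inner (S (uin h k) - S (p h k)) (w - W h k) \<le> cS * \<epsilon> k * norm (w - W h k)"
    using norm_cauchy_schwarz[of "S (uin h k) - S (p h k)" "w - W h k"]
      mult_right_mono[OF S_uin_near_S_p[OF h k] norm_ge_zero[of "w - W h k"]]
    by linarith
  ultimately show ?thesis
    by (simp add: S_err_eq[OF h(1)] inner_add_left inner_diff_right algebra_simps)
qed

lemma D_Suc_le:
  assumes h: "0 < h" "h \<le> hmax"
  shows "D h (Suc k) \<le> D h k + \<tau> (Suc k) * (2 * cU * cS * cS * \<epsilon> (Suc k) + (1 + cS) * \<delta> h * (2 * cU))"
proof -
  let ?e = "err h (Suc k)" and ?u = "uin h (Suc k)" and ?\<sigma> = "\<sigma> h (Suc k)"
  have k: "Suc k \<ge> 1" by simp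
  have eL: "?e \<in> L2 \<Omega>" using err_L2 h by simp
  have "D h (Suc k) \<le> D h k - (L2inner \<Omega> (lam h (Suc k)) ?e - L2inner \<Omega> (lam h k) ?e)"
    unfolding D_def err_def using h
    by (intro bregman_dist_change_le udag_L2 p_L2 lam_L2 p_variational_inequality p_Uad)
  also have "L2inner \<Omega> (lam h (Suc k)) ?e
      = \<tau> (Suc k) * L2inner \<Omega> (Shstar h (z - Sh h ?u)) ?e + L2inner \<Omega> (lam h k) ?e"
    unfolding lam_Suc using h by (intro L2inner_scale_add_left Shstar_L2 lam_L2 err_L2)
  finally have D_Suc: "D h (Suc k) \<le> D h k - \<tau> (Suc k) * L2inner \<Omega> (Shstar h (z - Sh h ?u)) ?e"
    by simp
  have "L2inner \<Omega> (Shstar h (z - Sh h ?u)) ?e \<ge> inner (S ?e) (z - S ?u) - (1 + cS) * \<delta> h * L2norm \<Omega> ?e"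
    using discretization_inner_error[OF h(1) algU[OF h k] eL] by (simp add: abs_le_iff)
  moreover have "(1 + cS) * \<delta> h * L2norm \<Omega> ?e \<le> (1 + cS) * \<delta> h * (2 * cU)"
    using err_L2norm_le[OF h(1)] L2_opbound_nonneg[of \<Omega> S] \<delta>_nonneg[of h] h
    by (intro mult_left_mono mult_nonneg_nonneg) auto
  moreover have "inner (S ?e) (z - S ?u) = inner (S ?e) res + (norm ?\<sigma>)\<^sup>2 + inner (S ?u - S (p h (Suc k))) ?\<sigma>"
  proof -
    have "z - S ?u = res + ?\<sigma>" by (simp add: res_def \<sigma>_def)
    then show ?thesis
      by (simp add: S_err_eq[OF h(1)] inner_add_left inner_add_right power2_norm_eq_inner)
  qed
  moreover have "- inner (S ?u - S (p h (Suc k))) ?\<sigma> \<le> (cS * \<epsilon> (Suc k)) * (cS * (2 * cU))"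
    using Cauchy_Schwarz_ineq2[of "S ?u - S (p h (Suc k))" ?\<sigma>]
      mult_mono[OF S_uin_near_S_p[OF h k] \<sigma>_norm_le[OF h k]
        mult_nonneg_nonneg[OF L2_opbound_nonneg less_imp_le[OF \<epsilon>_pos[OF k]]] norm_ge_zero]
    by linarith
  moreover have "(cS * \<epsilon> (Suc k)) * (cS * (2 * cU)) = 2 * cU * cS * cS * \<epsilon> (Suc k)"
    by simp
  ultimately have "- L2inner \<Omega> (Shstar h (z - Sh h ?u)) ?e \<le> 2 * cU * cS * cS * \<epsilon> (Suc k) + (1 + cS) * \<delta> h * (2 * cU)"
    using S_err_inner_res_nonneg[OF h(1), of "Suc k"] zero_le_power2[of "norm ?\<sigma>"] by linarith
  then show ?thesis
    using D_Suc mult_left_mono[OF _ less_imp_le[OF \<tau>_pos[OF k]]] by (smt (verit) mult_minus_right)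
qed

section \<open>A Lyapunov functional\<close>

definition lyap :: "real \<Rightarrow> nat \<Rightarrow> real" where
  "lyap h k = gammaB \<alpha> k * D h k + (1/2) * (norm (w - W h k))\<^sup>2"

lemma lyap_Suc_le:
  assumes h: "0 < h" "h \<le> hmax"
  shows "lyap h (Suc k) \<le> lyap h k
     + gammaB \<alpha> k * \<tau> (Suc k) * (2 * cU * cS * cS * \<epsilon> (Suc k) + (1 + cS) * \<delta> h * (2 * cU))
     + \<tau> (Suc k) * cS * \<epsilon> (Suc k) * norm (w - W h (Suc k))
     + \<tau> (Suc k) * gammaB \<alpha> (Suc k) * (2 * cU * (1 + cS) * \<delta> h)"
proof -
  let ?g = "gammaB \<alpha> k" and ?t = "\<tau> (Suc k)" and ?x = "w - W h (Suc k)"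
  have "?g * D h (Suc k) \<le> ?g * D h k
      + ?g * ?t * (2 * cU * cS * cS * \<epsilon> (Suc k) + (1 + cS) * \<delta> h * (2 * cU))"
    using mult_left_mono[OF D_Suc_le[OF h, of k] gammaB_nonneg] by (simp add: algebra_simps)
  moreover have "?t * D h (Suc k) \<le> ?t * (inner (\<sigma> h (Suc k)) ?x + cS * \<epsilon> (Suc k) * norm ?x
      + 2 * cU * (1 + cS) * \<delta> h * gammaB \<alpha> (Suc k))"
    using mult_left_mono[OF D_le_source[OF h, of "Suc k"] less_imp_le[OF \<tau>_pos]] by simp
  moreover have "inner (?t *\<^sub>R \<sigma> h (Suc k)) ?x + (1/2) * (norm ?x)\<^sup>2 \<le> (1/2) * (norm (w - W h k))\<^sup>2"
    using inner_add_half_norm_square_le[of "?t *\<^sub>R \<sigma> h (Suc k)" ?x] by (simp add: W_def)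
  ultimately show ?thesis
    unfolding lyap_def gammaB_Suc by (simp add: algebra_simps)
qed


definition R :: "nat \<Rightarrow> real" where
  "R j = (let i = Suc j in
     \<epsilon> i / \<alpha> i + (\<epsilon> i)\<^sup>2 / (\<alpha> i)\<^sup>2 + gammaB \<alpha> (i - 1) * \<epsilon> i / \<alpha> i + (\<epsilon> i)\<^sup>2 / \<alpha> i)"

lemma R_summable: "summable R"
  using R_sum unfolding R_def .

lemma R_ge: "\<epsilon> (Suc j) / \<alpha> (Suc j) \<le> R j" "gammaB \<alpha> j * \<epsilon> (Suc j) / \<alpha> (Suc j) \<le> R j"
proof -
  have "0 < \<alpha> (Suc j)" "0 < \<epsilon> (Suc j)" using \<alpha>_pos \<epsilon>_pos by auto
  then have "0 \<le> \<epsilon> (Suc j) / \<alpha> (Suc j)" "0 \<le> gammaB \<alpha> j * \<epsilon> (Suc j) / \<alpha> (Suc j)"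
    "0 \<le> (\<epsilon> (Suc j))\<^sup>2 / \<alpha> (Suc j)"
    using gammaB_nonneg[of j] by simp_all
  then show "\<epsilon> (Suc j) / \<alpha> (Suc j) \<le> R j" "gammaB \<alpha> j * \<epsilon> (Suc j) / \<alpha> (Suc j) \<le> R j"
    unfolding R_def Let_def by simp_all
qed

lemma R_nonneg: "0 \<le> R j"
proof -
  have "0 < \<epsilon> (Suc j) / \<alpha> (Suc j)" using \<alpha>_pos \<epsilon>_pos by simp
  then show ?thesis using R_ge(1)[of j] by linarith
qed

lemma sum_shifted_le_suminf_R:
  assumes "\<And>j. f (Suc j) \<le> R j"
  shows "(\<Sum>k=1..K. f k) \<le> suminf R"
proof -
  have "(\<Sum>k=1..K. f k) = (\<Sum>j<K. f (Suc j))"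
    using sum.atLeast1_atMost_eq[of f K] by simp
  also have "\<dots> \<le> (\<Sum>j<K. R j)" using assms by (rule sum_mono)
  also have "\<dots> \<le> suminf R" using R_summable R_nonneg by (intro sum_le_suminf) auto
  finally show ?thesis .
qed

definition G :: "nat \<Rightarrow> real" where "G K = (\<Sum>k=1..K. \<tau> k * gammaB \<alpha> k)"

lemma G_nonneg: "0 \<le> G K"
  unfolding G_def using \<tau>_pos gammaB_nonneg by (intro sum_nonneg mult_nonneg_nonneg) (auto simp: less_imp_le)

definition lyap_bound :: "real \<Rightarrow> real" where
  "lyap_bound s = (let A = cS * suminf R;
      B = (1/2) * (norm w)\<^sup>2 + 2 * cU * cS * cS * suminf R + 4 * cU * (1 + cS) * s
    in B + A * (2 * A + sqrt (2 * B)))"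

text \<open>The summability of R bounds the inexactness terms of the recursion for the Lyapunov
  functional, and delta(h) G_K its discretisation terms.\<close>

lemma lyap_le:
  assumes h: "0 < h" "h \<le> hmax" and s: "\<delta> h * G K \<le> s"
  shows "lyap h K \<le> lyap_bound s"
proof -
  define a where "a k = (if k = 0 then 0 else \<tau> k * cS * \<epsilon> k)" for k
  define b where "b k = (if k = 0 then 0 else
     gammaB \<alpha> (k - 1) * \<tau> k * (2 * cU * cS * cS * \<epsilon> k + (1 + cS) * \<delta> h * (2 * cU))
     + \<tau> k * gammaB \<alpha> k * (2 * cU * (1 + cS) * \<delta> h))" for k
  define A where "A = (\<Sum>k=1..K. a k)"
  define B where "B = lyap h 0 + (\<Sum>k=1..K. b k)"
  have cS: "0 \<le> cS" and \<delta>: "0 \<le> \<delta> h" using L2_opbound_nonneg \<delta>_nonneg h by auto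
  have a_nonneg: "0 \<le> a k" for k
    unfolding a_def using \<tau>_pos \<epsilon>_pos cS by (auto intro!: mult_nonneg_nonneg simp: less_imp_le)
  have b_nonneg: "0 \<le> b k" for k
    unfolding b_def using \<tau>_pos \<epsilon>_pos cS cU_nonneg \<delta> gammaB_nonneg
    by (auto intro!: add_nonneg_nonneg mult_nonneg_nonneg simp: less_imp_le)
  have gronwall: "lyap h K \<le> B + A * (2 * A + sqrt (2 * B))"
    unfolding A_def B_def
  proof (rule discrete_Bihari_inequality[where x = "\<lambda>k. norm (w - W h k)"])
    show "lyap h (Suc k) \<le> lyap h k + a (Suc k) * norm (w - W h (Suc k)) + b (Suc k)" for k
      using lyap_Suc_le[OF h, of k] unfolding a_def b_def by simp
    show "(norm (w - W h k))\<^sup>2 \<le> 2 * lyap h k" for k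
      unfolding lyap_def using mult_nonneg_nonneg[OF gammaB_nonneg D_nonneg[OF h(1)]] by simp
  qed (auto simp: a_nonneg b_nonneg)
  have A_le: "A \<le> cS * suminf R"
  proof -
    have "A = cS * (\<Sum>k=1..K. \<tau> k * \<epsilon> k)"
      unfolding A_def a_def by (simp add: sum_distrib_left algebra_simps)
    also have "\<dots> \<le> cS * suminf R"
      using cS R_ge(1) by (intro mult_left_mono sum_shifted_le_suminf_R) (auto simp: \<tau>_def)
    finally show ?thesis .
  qed
  have B_le: "B \<le> (1/2) * (norm w)\<^sup>2 + 2 * cU * cS * cS * suminf R + 4 * cU * (1 + cS) * s"
  proof -
    have b_le: "b k \<le> 2 * cU * cS * cS * (gammaB \<alpha> (k - 1) * \<tau> k * \<epsilon> k) + 4 * cU * (1 + cS) * \<delta> h * (\<tau> k * gammaB \<alpha> k)"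
      if "k \<in> {1..K}" for k
    proof -
      have "gammaB \<alpha> (k - 1) \<le> gammaB \<alpha> k" using gammaB_le_Suc[of "k - 1"] that by simp
      moreover have "0 \<le> \<tau> k * ((1 + cS) * \<delta> h * (2 * cU))"
        using \<tau>_pos[of k] that cS cU_nonneg \<delta> by (intro mult_nonneg_nonneg) auto
      ultimately have "gammaB \<alpha> (k - 1) * (\<tau> k * ((1 + cS) * \<delta> h * (2 * cU)))
          \<le> gammaB \<alpha> k * (\<tau> k * ((1 + cS) * \<delta> h * (2 * cU)))"
        by (rule mult_right_mono)
      then show ?thesis using that unfolding b_def by (simp add: algebra_simps)
    qed
    have "(\<Sum>k=1..K. b k) \<le> (\<Sum>k=1..K. 2 * cU * cS * cS * (gammaB \<alpha> (k - 1) * \<tau> k * \<epsilon> k)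
        + 4 * cU * (1 + cS) * \<delta> h * (\<tau> k * gammaB \<alpha> k))"
      using b_le by (rule sum_mono)
    also have "\<dots> = 2 * cU * cS * cS * (\<Sum>k=1..K. gammaB \<alpha> (k - 1) * \<tau> k * \<epsilon> k)
        + 4 * cU * (1 + cS) * (\<delta> h * G K)"
      by (simp add: sum.distrib sum_distrib_left G_def algebra_simps)
    also have "\<dots> \<le> 2 * cU * cS * cS * suminf R + 4 * cU * (1 + cS) * s"
      using cU_nonneg cS s R_ge(2)
      by (intro add_mono mult_left_mono sum_shifted_le_suminf_R) (auto simp: \<tau>_def)
    finally show ?thesis unfolding B_def lyap_def by (simp add: gammaB_0 W_def)
  qed
  have "0 \<le> A" "0 \<le> B" using a_nonneg b_nonneg unfolding A_def B_def lyap_def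
    by (auto simp: sum_nonneg gammaB_0 W_def)
  then show ?thesis
    unfolding lyap_bound_def Let_def using gronwall A_le B_le by (meson order_trans Bihari_bound_mono)
qed

lemma iterate_error_le:
  assumes h: "0 < h" "h \<le> hmax" and K: "K \<ge> 1" and s: "\<delta> h * G K \<le> s"
  shows "L2norm \<Omega> (\<lambda>x. uin h K x - udag x) \<le> \<epsilon> K + sqrt (2 * lyap_bound s / gammaB \<alpha> K)"
proof -
  have "gammaB \<alpha> K * ((1/2) * (L2norm \<Omega> (err h K))\<^sup>2) \<le> gammaB \<alpha> K * D h K"
    using D_ge[OF h(1), of K] gammaB_pos[OF K] by (intro mult_left_mono) auto
  also have "\<dots> \<le> lyap h K" unfolding lyap_def by simp
  also have "\<dots> \<le> lyap_bound s" using lyap_le[OF h s] .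
  finally have "(L2norm \<Omega> (err h K))\<^sup>2 \<le> 2 * lyap_bound s / gammaB \<alpha> K"
    using gammaB_pos[OF K] by (simp add: field_simps)
  then have "L2norm \<Omega> (err h K) \<le> sqrt (2 * lyap_bound s / gammaB \<alpha> K)"
    using L2norm_nonneg real_le_rsqrt by blast
  moreover have "L2norm \<Omega> (\<lambda>x. uin h K x - udag x)
      \<le> L2norm \<Omega> (\<lambda>x. uin h K x - p h K x) + L2norm \<Omega> (err h K)"
    using L2norm_triangle_diff[OF uin_L2[OF h K] p_L2[OF h(1), of K] udag_L2]
    unfolding err_def by (simp add: L2norm_minus_commute[of \<Omega> "p h K"])
  ultimately show ?thesis using uin_near_p[OF h K] by linarith
qed

lemma \<epsilon>_tendsto_zero: "\<epsilon> \<longlonglongrightarrow> 0"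
proof -
  obtain B where B: "\<forall>k\<ge>1. \<alpha> k \<le> B" using \<alpha>_bdd by blast
  then have "0 < B" using \<alpha>_pos[of 1] by force
  have "(\<lambda>j. \<epsilon> (Suc j)) \<longlonglongrightarrow> 0"
  proof (rule tendsto_sandwich[of "\<lambda>_. 0" _ _ "\<lambda>j. B * R j"])
    show "\<forall>\<^sub>F j in sequentially. 0 \<le> \<epsilon> (Suc j)" using \<epsilon>_pos by (simp add: less_imp_le)
    have "\<epsilon> (Suc j) \<le> B * R j" for j
    proof -
      have "0 < \<alpha> (Suc j)" using \<alpha>_pos by simp
      then have "\<epsilon> (Suc j) = \<alpha> (Suc j) * (\<epsilon> (Suc j) / \<alpha> (Suc j))" by simp
      also have "\<dots> \<le> B * (\<epsilon> (Suc j) / \<alpha> (Suc j))"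
        using B \<open>0 < \<alpha> (Suc j)\<close> \<epsilon>_pos[of "Suc j"] by (intro mult_right_mono) auto
      also have "\<dots> \<le> B * R j"
        using R_ge(1)[of j] \<open>0 < B\<close> by (intro mult_left_mono) auto
      finally show ?thesis .
    qed
    then show "\<forall>\<^sub>F j in sequentially. \<epsilon> (Suc j) \<le> B * R j" by simp
    show "(\<lambda>j. B * R j) \<longlonglongrightarrow> 0"
      using tendsto_mult_right_zero[OF summable_LIMSEQ_zero[OF R_summable], of B] by (simp add: mult.commute)
  qed simp
  then show ?thesis by (simp add: filterlim_sequentially_Suc)
qed

lemma gammaB_tendsto_at_top: "filterlim (gammaB \<alpha>) at_top sequentially"
proof -
  obtain B where B: "\<forall>k\<ge>1. \<alpha> k \<le> B" using \<alpha>_bdd by blast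
  then have "0 < B" using \<alpha>_pos[of 1] by force
  have "(1 / B) * real K \<le> gammaB \<alpha> K" for K
  proof -
    have "(1 / B) * real K = (\<Sum>k=1..K. 1 / B)" by simp
    also have "\<dots> \<le> (\<Sum>k=1..K. 1 / \<alpha> k)"
      using B \<alpha>_pos \<open>0 < B\<close> by (intro sum_mono) (auto intro!: divide_left_mono)
    finally show ?thesis by (simp add: gammaB_def)
  qed
  moreover have "filterlim (\<lambda>K. (1 / B) * real K) at_top sequentially"
    using \<open>0 < B\<close> by (intro filterlim_tendsto_pos_mult_at_top[OF tendsto_const] filterlim_real_sequentially) auto
  ultimately show ?thesis by (auto intro: filterlim_at_top_mono)
qed

definition H_lin :: "nat \<Rightarrow> real" where
  "H_lin i = rhoB \<alpha> i / \<alpha> i + gammaB \<alpha> (i - 1) / \<alpha> i + gammaB \<alpha> (i - 1) * rhoB \<alpha> i / \<alpha> i"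

definition H_quad :: "nat \<Rightarrow> real" where
  "H_quad i = (rhoB \<alpha> i)\<^sup>2 / (\<alpha> i)\<^sup>2 + (rhoB \<alpha> i)\<^sup>2 / \<alpha> i"

text \<open>Beyond the weights of the H-terms, the stopping weight contains G, so that the stopping
  rule also controls the discretisation terms of the Lyapunov bound.\<close>

definition stop_weight :: "nat \<Rightarrow> real" where
  "stop_weight K = (\<Sum>i=1..K. H_lin i) + (\<Sum>i=1..K. H_quad i) + G K"

lemma sum_H_lin_nonneg: "0 \<le> (\<Sum>i=1..K. H_lin i)"
proof (rule sum_nonneg)
  fix i assume "i \<in> {1..K}"
  then show "0 \<le> H_lin i"
    using \<alpha>_pos[of i] gammaB_nonneg[of "i - 1"] unfolding H_lin_def rhoB_def by (simp add: add_nonneg_nonneg)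
qed

lemma sum_H_quad_nonneg: "0 \<le> (\<Sum>i=1..K. H_quad i)"
proof (rule sum_nonneg)
  fix i assume "i \<in> {1..K}"
  then show "0 \<le> H_quad i" using \<alpha>_pos[of i] unfolding H_quad_def by simp
qed

lemma stop_weight_nonneg: "0 \<le> stop_weight K"
  unfolding stop_weight_def using sum_H_lin_nonneg sum_H_quad_nonneg G_nonneg by (intro add_nonneg_nonneg)

lemma stop_weight_0: "stop_weight 0 = 0"
  by (simp add: stop_weight_def G_def)

lemma \<delta>_le_\<delta>_hmax: "0 < h \<Longrightarrow> h \<le> hmax \<Longrightarrow> \<delta> h \<le> \<delta> hmax"
  using \<delta>_mono hmax_pos unfolding mono_on_def by auto

lemma H_sum_le:
  assumes h: "0 < h" "h \<le> hmax" and K: "\<delta> h * stop_weight K \<le> sqrt (\<delta> h)"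
  shows "(\<Sum>i=1..K. \<delta> h * (rhoB \<alpha> i / \<alpha> i + gammaB \<alpha> (i - 1) / \<alpha> i
                              + gammaB \<alpha> (i - 1) * rhoB \<alpha> i / \<alpha> i)
                    + (\<delta> h)\<^sup>2 * ((rhoB \<alpha> i)\<^sup>2 / (\<alpha> i)\<^sup>2 + (rhoB \<alpha> i)\<^sup>2 / \<alpha> i))
    \<le> sqrt (\<delta> hmax) * (1 + \<delta> hmax)"
proof -
  have \<delta>: "0 \<le> \<delta> h" "\<delta> h \<le> \<delta> hmax" using \<delta>_nonneg \<delta>_le_\<delta>_hmax h by auto
  have lin: "\<delta> h * (\<Sum>i=1..K. H_lin i) \<le> sqrt (\<delta> h)" and quad: "\<delta> h * (\<Sum>i=1..K. H_quad i) \<le> sqrt (\<delta> h)"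
    using K \<delta>(1) sum_H_lin_nonneg sum_H_quad_nonneg G_nonneg
    unfolding stop_weight_def by (smt (verit) mult_left_mono)+
  have "(\<Sum>i=1..K. \<delta> h * (rhoB \<alpha> i / \<alpha> i + gammaB \<alpha> (i - 1) / \<alpha> i
                              + gammaB \<alpha> (i - 1) * rhoB \<alpha> i / \<alpha> i)
                    + (\<delta> h)\<^sup>2 * ((rhoB \<alpha> i)\<^sup>2 / (\<alpha> i)\<^sup>2 + (rhoB \<alpha> i)\<^sup>2 / \<alpha> i))
      = (\<Sum>i=1..K. \<delta> h * H_lin i + \<delta> h * (\<delta> h * H_quad i))"
    by (intro sum.cong) (simp_all add: H_lin_def H_quad_def power2_eq_square)
  also have "\<dots> = \<delta> h * (\<Sum>i=1..K. H_lin i) + \<delta> h * (\<delta> h * (\<Sum>i=1..K. H_quad i))"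
    by (simp only: sum.distrib sum_distrib_left)
  also have "\<dots> \<le> sqrt (\<delta> h) + \<delta> hmax * sqrt (\<delta> h)"
    using lin mult_mono[OF \<delta>(2) quad] \<delta> sum_H_quad_nonneg by auto
  also have "\<dots> \<le> sqrt (\<delta> hmax) + \<delta> hmax * sqrt (\<delta> hmax)"
    using \<delta> \<delta>_nonneg[of hmax] hmax_pos by (intro add_mono mult_left_mono) auto
  also have "\<dots> = sqrt (\<delta> hmax) * (1 + \<delta> hmax)"
    by (simp add: algebra_simps)
  finally show ?thesis .
qed

lemma iterate_error_tendsto:
  assumes kh_lim: "filterlim kh at_top (at_right 0)"
    and kh_stop: "\<And>h. 0 < h \<Longrightarrow> \<delta> h * stop_weight (kh h) \<le> sqrt (\<delta> h)"
  shows "((\<lambda>h. L2norm \<Omega> (\<lambda>x. uin h (kh h) x - udag x)) \<longlongrightarrow> 0) (at_right 0)"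
proof -
  define s where "s = sqrt (\<delta> hmax)"
  define bnd where "bnd K = \<epsilon> K + sqrt (2 * lyap_bound s / gammaB \<alpha> K)" for K
  have "bnd \<longlonglongrightarrow> 0 + sqrt 0"
    unfolding bnd_def
    by (intro tendsto_add \<epsilon>_tendsto_zero tendsto_real_sqrt tendsto_divide_0[OF tendsto_const]
        filterlim_at_top_imp_at_infinity gammaB_tendsto_at_top)
  then have bnd_lim: "((\<lambda>h. bnd (kh h)) \<longlongrightarrow> 0) (at_right 0)"
    using filterlim_compose kh_lim by fastforce
  have bound: "L2norm \<Omega> (\<lambda>x. uin h (kh h) x - udag x) \<le> bnd (kh h)"
    if h: "0 < h" "h \<le> hmax" and K: "kh h \<ge> 1" for h
  proof -
    have "\<delta> h * G (kh h) \<le> \<delta> h * stop_weight (kh h)"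
      using sum_H_lin_nonneg sum_H_quad_nonneg \<delta>_nonneg h
      unfolding stop_weight_def by (intro mult_left_mono) auto
    also have "\<dots> \<le> sqrt (\<delta> h)" using kh_stop h by simp
    also have "\<dots> \<le> s" unfolding s_def using \<delta>_le_\<delta>_hmax[OF h] by simp
    finally show ?thesis unfolding bnd_def by (rule iterate_error_le[OF h K])
  qed
  have "\<forall>\<^sub>F h in at_right 0. 1 \<le> kh h"
    using kh_lim by (simp add: filterlim_at_top)
  moreover have "\<forall>\<^sub>F h in at_right 0. 0 < h \<and> h \<le> hmax"
    unfolding eventually_at_right_field using hmax_pos by (intro exI[of _ hmax]) auto
  ultimately have "\<forall>\<^sub>F h in at_right 0. 0 < h \<and> h \<le> hmax \<and> 1 \<le> kh h"
    by (simp add: eventually_conj_iff)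
  then have ev_bound: "\<forall>\<^sub>F h in at_right 0. L2norm \<Omega> (\<lambda>x. uin h (kh h) x - udag x) \<le> bnd (kh h)"
    by (rule eventually_mono) (simp add: bound)
  show ?thesis
  proof (rule tendsto_sandwich[of "\<lambda>_. 0" _ _ "\<lambda>h. bnd (kh h)"])
    show "\<forall>\<^sub>F h in at_right 0. 0 \<le> L2norm \<Omega> (\<lambda>x. uin h (kh h) x - udag x)"
      by (simp add: L2norm_nonneg)
  qed (use ev_bound bnd_lim in simp_all)
qed

end

theorem corollary4p4:
  fixes \<Omega> :: "'n::euclidean_space set"
    and S :: "('n \<Rightarrow> real) \<Rightarrow> 'y::{real_inner, complete_space}"
    and Sstar :: "'y \<Rightarrow> ('n \<Rightarrow> real)"
    and Sh :: "real \<Rightarrow> ('n \<Rightarrow> real) \<Rightarrow> 'y"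
    and Shstar :: "real \<Rightarrow> 'y \<Rightarrow> ('n \<Rightarrow> real)"
    and z :: 'y and ua ub udag :: "'n \<Rightarrow> real" and w :: 'y
    and \<delta> :: "real \<Rightarrow> real"
    and \<alpha> \<epsilon> :: "nat \<Rightarrow> real" and hmax :: real
    and uin :: "real \<Rightarrow> nat \<Rightarrow> ('n \<Rightarrow> real)"
  assumes \<Omega>_bounded: "bounded \<Omega>" and \<Omega>_meas: "\<Omega> \<in> sets lebesgue"
    and S_lin: "bounded_linear_L2 \<Omega> S" and S_adj: "is_adjoint_L2 \<Omega> S Sstar"
    and ua: "ua \<in> Linfty \<Omega>" and ub: "ub \<in> Linfty \<Omega>"
    and uab: "AE x in lebesgue_on \<Omega>. ua x \<le> ub x"
    and Sh_lin: "\<And>h. h > 0 \<Longrightarrow> bounded_linear_L2 \<Omega> (Sh h)"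
    and Sh_adj: "\<And>h. h > 0 \<Longrightarrow> is_adjoint_L2 \<Omega> (Sh h) (Shstar h)"
    and Sh_fin: "\<And>h. h > 0 \<Longrightarrow> \<exists>B. finite B \<and> Sh h ` L2 \<Omega> \<subseteq> span B"
    and \<delta>_cont: "continuous_on {0..} \<delta>" and \<delta>_mono: "mono_on {0..} \<delta>"
    and \<delta>_0: "\<delta> 0 = 0" and \<delta>_nonneg: "\<And>h. h \<ge> 0 \<Longrightarrow> \<delta> h \<ge> 0"
    and \<delta>_est: "\<And>h u. h > 0 \<Longrightarrow> u \<in> Uad \<Omega> ua ub \<Longrightarrow>
        norm (S u - Sh h u) + L2norm \<Omega> (\<lambda>x. Sstar (Sh h u - z) x - Shstar h (Sh h u - z) x) \<le> \<delta> h"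
    and \<alpha>_pos: "\<And>k. k \<ge> 1 \<Longrightarrow> \<alpha> k > 0"
    and \<alpha>_bdd: "\<exists>B. \<forall>k\<ge>1. \<alpha> k \<le> B"
    and udag_sol: "udag \<in> Uad \<Omega> ua ub"
    and udag_min: "\<And>u. u \<in> Uad \<Omega> ua ub \<Longrightarrow>
        (1/2) * (norm (S udag - z))\<^sup>2 \<le> (1/2) * (norm (S u - z))\<^sup>2"
    and source: "AE x in lebesgue_on \<Omega>. udag x = projU \<Omega> ua ub (Sstar w) x"
    and \<epsilon>_pos: "\<And>k. k \<ge> 1 \<Longrightarrow> \<epsilon> k > 0"
    and R_sum: "summable (\<lambda>j. let i = Suc j in
        \<epsilon> i / \<alpha> i + (\<epsilon> i)\<^sup>2 / (\<alpha> i)\<^sup>2 + gammaB \<alpha> (i - 1) * \<epsilon> i / \<alpha> i + (\<epsilon> i)\<^sup>2 / \<alpha> i)"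
    and hmax_pos: "hmax > 0"
    and alg0: "\<And>h. 0 < h \<Longrightarrow> h \<le> hmax \<Longrightarrow> uin h 0 = projU \<Omega> ua ub (\<lambda>x. 0)"
    and algU: "\<And>h k. 0 < h \<Longrightarrow> h \<le> hmax \<Longrightarrow> k \<ge> 1 \<Longrightarrow> uin h k \<in> Uad \<Omega> ua ub"
    and algB: "\<And>h k. 0 < h \<Longrightarrow> h \<le> hmax \<Longrightarrow> k \<ge> 1 \<Longrightarrow>
        breg \<Omega> ua ub (Sh h) (Shstar h) z (\<alpha> k) (lamB \<alpha> (Sh h) (Shstar h) z (uin h) (k - 1)) (uin h k)
          \<le> \<epsilon> k"
  shows "\<exists>C. \<exists>kh :: real \<Rightarrow> nat.
     (\<forall>h. 0 < h \<and> h \<le> hmax \<longrightarrow>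
        (\<Sum>i=1..kh h. \<delta> h * (rhoB \<alpha> i / \<alpha> i + gammaB \<alpha> (i - 1) / \<alpha> i
                                + gammaB \<alpha> (i - 1) * rhoB \<alpha> i / \<alpha> i)
                      + (\<delta> h)\<^sup>2 * ((rhoB \<alpha> i)\<^sup>2 / (\<alpha> i)\<^sup>2 + (rhoB \<alpha> i)\<^sup>2 / \<alpha> i)) \<le> C)
     \<and> filterlim kh at_top (at_right 0)
     \<and> ((\<lambda>h. L2norm \<Omega> (\<lambda>x. uin h (kh h) x - udag x)) \<longlongrightarrow> 0) (at_right 0)"
proof -
  have "ua \<in> L2 \<Omega>" "ub \<in> L2 \<Omega>"
    using Linfty_subset_L2[OF \<Omega>_bounded \<Omega>_meas] ua ub by auto
  interpret inexact_bregman \<Omega> S Sstar Sh Shstar z ua ub udag w \<delta> \<alpha> \<epsilon> hmax uin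
    by (rule inexact_bregman.intro; fact)
  let ?kh = "stop_index \<delta> stop_weight"
  have "(\<delta> \<longlongrightarrow> \<delta> 0) (at 0 within {0..})"
    using \<delta>_cont unfolding continuous_on_def by simp
  then have "(\<delta> \<longlongrightarrow> \<delta> 0) (at 0 within {0<..})"
    by (rule tendsto_within_subset) auto
  then have lim: "filterlim ?kh at_top (at_right 0)"
  proof (intro stop_index_tendsto)
    show "0 \<le> \<delta> h" if "0 < h" for h using \<delta>_nonneg that by simp
  qed (simp_all add: \<delta>_0 stop_weight_nonneg)
  have stop: "\<delta> h * stop_weight (?kh h) \<le> sqrt (\<delta> h)" if "0 < h" for h
    by (rule stop_index_le_sqrt) (simp_all add: \<delta>_nonneg less_imp_le that stop_weight_0)
  show ?thesis
    by (intro exI[of _ "sqrt (\<delta> hmax) * (1 + \<delta> hmax)"] exI[of _ ?kh] conjI allI impI lim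
        iterate_error_tendsto[OF lim stop], elim conjE, rule H_sum_le[OF _ _ stop], assumption+)
qed

end
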